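(* Let $\Gamma$ be a regular $N\times 2$ potential game with potential $u$. Then the set $\mathrm{NE}$ of Nash equilibria of $\Gamma$ is finite. Moreover, there exists $\lambda_0>0$ and, for each $x^*\in\mathrm{NE}$, a continuous function $\lambda\mapsto x^{\lambda}(x^* )$ from $(0,\lambda_0)$ into $\Delta=[0,1]^N$ with the following properties. For every $\lambda\in(0,\lambda_0)$, the points $x^{\lambda}(x^* )$, $x^*\in\mathrm{NE}$, are pairwise distinct and $\mathrm{ND}(\lambda)=\{x^{\lambda}(x^* ):x^*\in\mathrm{NE}\}$. For every $x^*\in\mathrm{NE}$, $x^{\lambda}(x^* )\to x^*$ as $\lambda\to 0$. In particular, $\mathrm{ND}(\lambda)$ is finite and in one-to-one correspondence with $\mathrm{NE}$ for every $\lambda\in(0,\lambda_0)$.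
   Context: An $N\times 2$ game has players $i=1,\dots,N$, each with action set $A_i=\{a_i^1,a_i^2\}$, and utilities $u_i:A_1\times\cdots\times A_N\to\mathbb{R}$. It is a potential game with potential $u:A_1\times\cdots\times A_N\to\mathbb{R}$ if $u(a_i,a_{-i})-u(a_i',a_{-i})=u_i(a_i,a_{-i})-u_i(a_i',a_{-i})$ for all $i$, all $a_i,a_i'\in A_i$ and all $a_{-i}$. A mixed strategy of player $i$ is a number $x_i\in[0,1]$, the probability of playing $a_i^1$. Joint mixed strategies form $\Delta=[0,1]^N$. The multilinear extension of the potential is $$U(x)=\sum_{k_1,\dots,k_N\in\{1,2\}} z_1^{k_1}(x_1)\cdots z_N^{k_N}(x_N)\,u(a_1^{k_1},\dots,a_N^{k_N}),$$ where $z_i^1(x_i)=x_i$ and $z_i^2(x_i)=1-x_i$. We write $U(a_i^k,x_{-i})$ for the value of $U$ when player $i$ plays $a_i^k$ with probability 1 and the others play $x_{-i}$. The set of Nash equilibria is $\mathrm{NE}=\{x\in\Delta: U(x_i,x_{-i})\ge U(x_i',x_{-i})\ \text{for all } i \text{ and all } x_i'\in[0,1]\}$. For $\lambda>0$, the logit (smoothed) best response is $$\widehat{BR}^\lambda_i(x)=\frac{\exp(U(a_i^1,x_{-i})/\lambda)}{\sum_{k=1,2}\exp(U(a_i^k,x_{-i})/\lambda)},\qquad \widehat{BR}^\lambda(x)=(\widehat{BR}^\lambda_1(x),\dots,\widehat{BR}^\lambda_N(x)).$$ The set of Nash distributions is $\mathrm{ND}(\lambda)=\{x\in\Delta: x=\widehat{BR}^\lambda(x)\}$.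 Regularity. Let $x^*\in\mathrm{NE}$, and relabel each player's two actions so that $x_i^*>0$ for all $i$; thus each player either mixes ($0<x_i^*<1$) or plays $a_i^1$ purely ($x_i^*=1$). - $x^*$ is quasi-strict if, for every $i$ with $x_i^*=1$, the action $a_i^2$ is not a best response to $x_{-i}^*$, i.e. $U(a_i^1,x^*_{-i})>U(a_i^2,x^*_{-i})$. - Let the mixing players be $i=1,\dots,\tilde N$ after reordering. The restricted Hessian relative to $x^*$ is the $\tilde N\times\tilde N$ matrix $H(x)=\big(\partial^2 U(x)/\partial x_i\partial x_j\big)_{i,j=1,\dots,\tilde N}$, which may be evaluated at any $x\in\Delta$. - $x^*$ is regular if it is quasi-strict and $H(x^* )$ is invertible. - The potential game is regular if every Nash equilibrium is regular. *)

theory Defs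
  imports "HOL-Analysis.Analysis"
begin

text \<open>Players are the elements of a finite type 'n (so N = CARD('n)).
  A pure action profile is a function 'n => bool: True encodes a_i^1, False encodes a_i^2.
  A mixed profile is a vector x :: real^'n, x$i = probability of a_i^1.\<close>

definition is_potential :: "('n \<Rightarrow> ('n \<Rightarrow> bool) \<Rightarrow> real) \<Rightarrow> (('n \<Rightarrow> bool) \<Rightarrow> real) \<Rightarrow> bool" where
  "is_potential ui u \<longleftrightarrow>
     (\<forall>i a c. u (a(i := c)) - u a = ui i (a(i := c)) - ui i a)"

definition mixed_profiles :: "(real^'n) set" ("\<Delta>") where
  "mixed_profiles = {x. \<forall>i. 0 \<le> x$i \<and> x$i \<le> 1}"

definition zfac :: "bool \<Rightarrow> real \<Rightarrow> real" where
  "zfac k t = (if k then t else 1 - t)"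

definition Uext :: "(('n::finite \<Rightarrow> bool) \<Rightarrow> real) \<Rightarrow> real^'n \<Rightarrow> real" where
  "Uext u x = (\<Sum>a\<in>(UNIV :: ('n \<Rightarrow> bool) set). (\<Prod>i\<in>UNIV. zfac (a i) (x$i)) * u a)"

definition upd :: "real^'n \<Rightarrow> 'n \<Rightarrow> real \<Rightarrow> real^'n" where
  "upd x i t = (\<chi> j. if j = i then t else x$j)"

text \<open>U(a_i^k, x_{-i}): k = True is a_i^1, k = False is a_i^2.\<close>
definition Upure :: "(('n::finite \<Rightarrow> bool) \<Rightarrow> real) \<Rightarrow> 'n \<Rightarrow> bool \<Rightarrow> real^'n \<Rightarrow> real" where
  "Upure u i k x = Uext u (upd x i (if k then 1 else 0))"

definition NE :: "(('n::finite \<Rightarrow> bool) \<Rightarrow> real) \<Rightarrow> (real^'n) set" where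
  "NE u = {x \<in> \<Delta>. \<forall>i. \<forall>t\<in>{0..1}. Uext u x \<ge> Uext u (upd x i t)}"

definition logitBR :: "(('n::finite \<Rightarrow> bool) \<Rightarrow> real) \<Rightarrow> real \<Rightarrow> real^'n \<Rightarrow> real^'n" where
  "logitBR u lam x = (\<chi> i. exp (Upure u i True x / lam) /
        (exp (Upure u i True x / lam) + exp (Upure u i False x / lam)))"

definition ND :: "(('n::finite \<Rightarrow> bool) \<Rightarrow> real) \<Rightarrow> real \<Rightarrow> (real^'n) set" where
  "ND u lam = {x \<in> \<Delta>. x = logitBR u lam x}"

definition partial :: "'n \<Rightarrow> (real^'n \<Rightarrow> real) \<Rightarrow> real^'n \<Rightarrow> real" where
  "partial i f x = deriv (\<lambda>t. f (upd x i t)) (x$i)"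

definition mixing_players :: "real^'n \<Rightarrow> 'n set" where
  "mixing_players x = {i. 0 < x$i \<and> x$i < 1}"

definition restr_hessian :: "(('n::finite \<Rightarrow> bool) \<Rightarrow> real) \<Rightarrow> real^'n \<Rightarrow> real^'n \<Rightarrow> 'n \<Rightarrow> 'n \<Rightarrow> real" where
  "restr_hessian u xs x i j = partial i (partial j (Uext u)) x"

definition invertible_on :: "'n set \<Rightarrow> ('n \<Rightarrow> 'n \<Rightarrow> real) \<Rightarrow> bool" where
  "invertible_on M H \<longleftrightarrow> (\<exists>G. (\<forall>i\<in>M. \<forall>k\<in>M. (\<Sum>j\<in>M. H i j * G j k) = (if i = k then 1 else 0))
                            \<and> (\<forall>i\<in>M. \<forall>k\<in>M. (\<Sum>j\<in>M. G i j * H j k) = (if i = k then 1 else 0)))"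

text \<open>Quasi-strictness, stated without relabelling: a player playing a_i^1 purely (x_i = 1)
  must strictly prefer a_i^1; a player playing a_i^2 purely (x_i = 0) must strictly prefer a_i^2
  (this is the relabelled condition).\<close>
definition quasi_strict :: "(('n::finite \<Rightarrow> bool) \<Rightarrow> real) \<Rightarrow> real^'n \<Rightarrow> bool" where
  "quasi_strict u x \<longleftrightarrow>
     (\<forall>i. x$i = 1 \<longrightarrow> Upure u i True x > Upure u i False x) \<and>
     (\<forall>i. x$i = 0 \<longrightarrow> Upure u i False x > Upure u i True x)"

definition regular_NE :: "(('n::finite \<Rightarrow> bool) \<Rightarrow> real) \<Rightarrow> real^'n \<Rightarrow> bool" where
  "regular_NE u x \<longleftrightarrow> quasi_strict u x \<and>
      invertible_on (mixing_players x) (restr_hessian u x x)"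

definition regular_game :: "(('n::finite \<Rightarrow> bool) \<Rightarrow> real) \<Rightarrow> bool" where
  "regular_game u \<longleftrightarrow> (\<forall>x\<in>NE u. regular_NE u x)"

end

theory Submission
  imports Defs
begin

text \<open>
  The potential is multiaffine, so the payoff gains \<open>dU u i\<close> and their slopes (the Hessian
  entries) are Lipschitz on the cube, and a Nash distribution is exactly a profile with
  \<open>x\<^sub>i = logistic (dU u i x / lam)\<close> for all \<open>i\<close>.

  Near a regular equilibrium \<open>s\<close>, a Nash distribution has its pure coordinates exponentially
  close to \<open>s\<close> (the payoff gap \<open>c\<close> is amplified by \<open>1 / lam\<close>), while on the mixing
  coordinates \<open>dU = lam * logit x\<close> is of order \<open>lam\<close>; inverting the Hessian turns this into a
  fixed-point problem on a small convex neighbourhood of \<open>s\<close>, solved by Brouwer's theorem, and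
  the same estimates make two solutions near \<open>s\<close> coincide. Equilibria are isolated, hence
  finitely many by compactness. Away from them the regret is bounded below, whereas it is at most
  \<open>N lam\<close> on Nash distributions, so for small \<open>lam\<close> every Nash distribution lies near exactly
  one equilibrium. The branch through each equilibrium is continuous because its graph is
  closed, and tends to the equilibrium because the existence radius can be taken arbitrarily
  small.
\<close>

lemma upd_nth: "upd x i t $ j = (if j = i then t else x $ j)"
  by (simp add: upd_def)

lemma upd_upd_same [simp]: "upd (upd x i s) i t = upd x i t"
  by (simp add: upd_def vec_eq_iff)

lemma upd_commute: "i \<noteq> j \<Longrightarrow> upd (upd x i s) j t = upd (upd x j t) i s"
  by (simp add: upd_def vec_eq_iff)

lemma upd_nth_self [simp]: "upd x i (x $ i) = x"
  by (simp add: upd_def vec_eq_iff)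

lemma upd_in_Delta: "x \<in> \<Delta> \<Longrightarrow> t \<in> {0..1} \<Longrightarrow> upd x i t \<in> \<Delta>"
  by (simp add: mixed_profiles_def upd_nth)

lemma Delta_eq_cbox: "(\<Delta> :: (real^'n::finite) set) = cbox 0 1"
  by (auto simp: mixed_profiles_def mem_box_cart)

lemma compact_Delta: "compact (\<Delta> :: (real^'n::finite) set)"
  and convex_Delta: "convex (\<Delta> :: (real^'n::finite) set)"
  by (simp_all add: Delta_eq_cbox)

lemma continuous_on_upd [continuous_intros]:
  "continuous_on S f \<Longrightarrow> continuous_on S g \<Longrightarrow> continuous_on S (\<lambda>x. upd (f x) i (g x))"
  unfolding upd_def
proof (intro continuous_on_vec_lambda)
  fix j assume "continuous_on S f" "continuous_on S g"
  then show "continuous_on S (\<lambda>x. if j = i then g x else f x $ j)"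
    by (cases "j = i") (auto intro!: continuous_intros)
qed

subsection \<open>Multiaffine functions on the cube\<close>

definition multiaffine :: "(real^'n \<Rightarrow> real) \<Rightarrow> bool" where
  "multiaffine f \<longleftrightarrow>
     (\<forall>x i t. f (upd x i t) = f (upd x i 0) + t * (f (upd x i 1) - f (upd x i 0)))"

definition coord_slope :: "'n \<Rightarrow> (real^'n \<Rightarrow> real) \<Rightarrow> real^'n \<Rightarrow> real" where
  "coord_slope i f x = f (upd x i 1) - f (upd x i 0)"

lemma multiaffine_upd_eq:
  "multiaffine f \<Longrightarrow> f (upd x i t) = f (upd x i 0) + t * coord_slope i f x"
  unfolding multiaffine_def coord_slope_def by blast

lemma multiaffine_diff_eq:
  "multiaffine f \<Longrightarrow> f (upd x i t) - f x = (t - x $ i) * coord_slope i f x"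
  using multiaffine_upd_eq[of f x i t] multiaffine_upd_eq[of f x i "x $ i"]
  by (simp add: algebra_simps)

lemma coord_slope_upd_same [simp]: "coord_slope i f (upd x i t) = coord_slope i f x"
  by (simp add: coord_slope_def)

lemma multiaffine_coord_slope:
  assumes f: "multiaffine f"
  shows "multiaffine (coord_slope i f)"
  unfolding multiaffine_def
proof (intro allI)
  fix x j t
  show "coord_slope i f (upd x j t) = coord_slope i f (upd x j 0)
          + t * (coord_slope i f (upd x j 1) - coord_slope i f (upd x j 0))"
  proof (cases "i = j")
    case False
    have "f (upd (upd x i v) j t) = f (upd (upd x i v) j 0) + t * coord_slope j f (upd x i v)" for v
      by (rule multiaffine_upd_eq[OF f])
    then show ?thesis
      unfolding coord_slope_def upd_commute[OF False] by (simp add: algebra_simps)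
  qed simp
qed

lemma coord_slope_bound:
  assumes "\<forall>y\<in>\<Delta>. \<bar>f y\<bar> \<le> C" and "x \<in> \<Delta>"
  shows "\<bar>coord_slope i f x\<bar> \<le> 2 * C"
proof -
  have "\<bar>f (upd x i 1)\<bar> \<le> C" "\<bar>f (upd x i 0)\<bar> \<le> C"
    using assms by (simp_all add: upd_in_Delta)
  then show ?thesis unfolding coord_slope_def by linarith
qed

text \<open>Changing the coordinates of \<open>y\<close> into those of \<open>x\<close> one at a time; the intermediate
  profiles \<open>W i\<close> take every coordinate from \<open>x\<close> or from \<open>y\<close>.\<close>

lemma multiaffine_telescope:
  fixes f :: "real^'n::finite \<Rightarrow> real"
  assumes f: "multiaffine f"
  obtains W where "\<And>i k. W i $ k = x $ k \<or> W i $ k = y $ k"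
    and "f x - f y = (\<Sum>i\<in>UNIV. (x $ i - y $ i) * coord_slope i f (W i))"
proof -
  define mix where "mix S = (\<chi> k. if k \<in> S then x $ k else y $ k)" for S
  have "\<exists>W. (\<forall>i k. W i $ k = x $ k \<or> W i $ k = y $ k) \<and>
      f (mix S) - f y = (\<Sum>i\<in>S. (x $ i - y $ i) * coord_slope i f (W i))" if "finite S" for S
    using that
  proof (induction S rule: finite_induct)
    case empty
    have "mix {} = y" by (simp add: mix_def vec_eq_iff)
    then show ?case by (intro exI[of _ "\<lambda>_. y"]) simp
  next
    case (insert i S)
    then obtain W where W: "\<forall>i k. W i $ k = x $ k \<or> W i $ k = y $ k"
      and eq: "f (mix S) - f y = (\<Sum>i\<in>S. (x $ i - y $ i) * coord_slope i f (W i))"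
      by blast
    have "mix (insert i S) = upd (mix S) i (x $ i)" "mix S $ i = y $ i"
      using insert.hyps by (auto simp: mix_def upd_def vec_eq_iff)
    then have "f (mix (insert i S)) - f (mix S) = (x $ i - y $ i) * coord_slope i f (mix S)"
      using multiaffine_diff_eq[OF f, of "mix S" i "x $ i"] by simp
    moreover have "(\<Sum>j\<in>S. (x $ j - y $ j) * coord_slope j f ((W(i := mix S)) j))
        = (\<Sum>j\<in>S. (x $ j - y $ j) * coord_slope j f (W j))"
      using insert.hyps by (intro sum.cong) auto
    ultimately have "f (mix (insert i S)) - f y
        = (\<Sum>j\<in>insert i S. (x $ j - y $ j) * coord_slope j f ((W(i := mix S)) j))"
      using eq insert.hyps by simp
    moreover have "\<forall>j k. (W(i := mix S)) j $ k = x $ k \<or> (W(i := mix S)) j $ k = y $ k"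
      using W by (auto simp: mix_def)
    ultimately show ?case by blast
  qed
  from this[of UNIV] obtain W where "\<forall>i k. W i $ k = x $ k \<or> W i $ k = y $ k"
    and "f (mix UNIV) - f y = (\<Sum>i\<in>UNIV. (x $ i - y $ i) * coord_slope i f (W i))"
    by auto
  moreover have "mix UNIV = x" by (simp add: mix_def vec_eq_iff)
  ultimately show ?thesis using that by auto
qed

definition dist1 :: "real^'n::finite \<Rightarrow> real^'n \<Rightarrow> real" where
  "dist1 x y = (\<Sum>i\<in>UNIV. \<bar>x $ i - y $ i\<bar>)"

lemma dist1_nonneg: "0 \<le> dist1 x y"
  by (simp add: dist1_def sum_nonneg)

lemma dist1_self [simp]: "dist1 x x = 0"
  by (simp add: dist1_def)

lemma dist1_commute: "dist1 x y = dist1 y x"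
  by (simp add: dist1_def abs_minus_commute)

lemma dist1_triangle: "dist1 x z \<le> dist1 x y + dist1 y z"
  unfolding dist1_def sum.distrib[symmetric] by (intro sum_mono) simp

lemma dist1_eq_0_iff: "dist1 x y = 0 \<longleftrightarrow> x = y"
  unfolding dist1_def by (subst sum_nonneg_eq_0_iff) (auto simp: vec_eq_iff)

lemma dist1_le_0_iff: "dist1 x y \<le> 0 \<longleftrightarrow> x = y"
  using dist1_nonneg[of x y] dist1_eq_0_iff[of x y] by linarith

lemma coord_le_dist1: "\<bar>x $ i - y $ i\<bar> \<le> dist1 x y"
  unfolding dist1_def by (rule member_le_sum) auto

lemma sum_UNIV_split_Compl:
  fixes f :: "'a::finite \<Rightarrow> 'b::comm_monoid_add"
  shows "(\<Sum>i\<in>UNIV. f i) = (\<Sum>i\<in>M. f i) + (\<Sum>i\<in>-M. f i)"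
proof -
  have "(UNIV :: 'a set) = M \<union> -M" by auto
  then show ?thesis by (simp add: sum.union_disjoint[symmetric])
qed

lemma dist1_split: "dist1 x y = (\<Sum>i\<in>M. \<bar>x $ i - y $ i\<bar>) + (\<Sum>i\<in>-M. \<bar>x $ i - y $ i\<bar>)"
  unfolding dist1_def by (rule sum_UNIV_split_Compl)

lemma dist1_between:
  assumes "\<And>k. w $ k = x $ k \<or> w $ k = y $ k"
  shows "dist1 w s \<le> dist1 x s + dist1 y s"
  unfolding dist1_def sum.distrib[symmetric]
proof (intro sum_mono)
  fix k
  show "\<bar>w $ k - s $ k\<bar> \<le> \<bar>x $ k - s $ k\<bar> + \<bar>y $ k - s $ k\<bar>"
    using assms[of k] by auto
qed

lemma between_in_Delta:
  assumes "x \<in> \<Delta>" "y \<in> \<Delta>" "\<And>k. w $ k = x $ k \<or> w $ k = y $ k"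
  shows "w \<in> \<Delta>"
  unfolding mixed_profiles_def
proof (intro CollectI allI)
  fix k
  show "0 \<le> w $ k \<and> w $ k \<le> 1"
    using assms(1,2) assms(3)[of k] by (auto simp: mixed_profiles_def)
qed

lemma dist_le_dist1: "dist x y \<le> dist1 x y"
  unfolding dist_norm dist1_def using norm_le_l1_cart[of "x - y"] by simp

lemma continuous_on_dist1 [continuous_intros]:
  "continuous_on S f \<Longrightarrow> continuous_on S (\<lambda>x. dist1 (f x) y)"
  unfolding dist1_def by (intro continuous_intros)

lemma convex_sublevel_set:
  assumes f: "convex_on UNIV f"
  shows "convex {x. f x \<le> r}"
proof (rule convexI)
  fix x y and p q :: real
  assume xy: "x \<in> {x. f x \<le> r}" "y \<in> {x. f x \<le> r}" and pq: "0 \<le> p" "0 \<le> q" "p + q = 1"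
  then have "f (p *\<^sub>R x + q *\<^sub>R y) \<le> p * f x + q * f y"
    using convex_onD[OF f, of q x y] by (simp add: eq_diff_eq[symmetric])
  also have "\<dots> \<le> p * r + q * r"
    using xy pq by (intro add_mono mult_left_mono) auto
  finally show "p *\<^sub>R x + q *\<^sub>R y \<in> {x. f x \<le> r}"
    using \<open>p + q = 1\<close> by (simp add: distrib_right[symmetric])
qed

lemma convex_on_sum_abs_coord_diff:
  "convex_on UNIV (\<lambda>x :: real^'n. \<Sum>i\<in>S. \<bar>x $ i - z $ i\<bar>)"
proof (rule convex_onI)
  fix t :: real and x y :: "real^'n"
  assume t: "0 < t" "t < 1"
  have "\<bar>((1 - t) *\<^sub>R x + t *\<^sub>R y) $ i - z $ i\<bar> \<le> (1 - t) * \<bar>x $ i - z $ i\<bar> + t * \<bar>y $ i - z $ i\<bar>" for i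
  proof -
    have "((1 - t) *\<^sub>R x + t *\<^sub>R y) $ i - z $ i = (1 - t) * (x $ i - z $ i) + t * (y $ i - z $ i)"
      by (simp add: algebra_simps)
    then show ?thesis using t abs_triangle_ineq[of "(1 - t) * (x $ i - z $ i)" "t * (y $ i - z $ i)"]
      by (simp add: abs_mult)
  qed
  then show "(\<Sum>i\<in>S. \<bar>((1 - t) *\<^sub>R x + t *\<^sub>R y) $ i - z $ i\<bar>)
      \<le> (1 - t) * (\<Sum>i\<in>S. \<bar>x $ i - z $ i\<bar>) + t * (\<Sum>i\<in>S. \<bar>y $ i - z $ i\<bar>)"
    by (simp add: sum_distrib_left sum.distrib[symmetric] sum_mono)
qed simp

lemma multiaffine_lipschitz:
  assumes f: "multiaffine f" and bound: "\<forall>z\<in>\<Delta>. \<bar>f z\<bar> \<le> C"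
    and x: "x \<in> \<Delta>" and y: "y \<in> \<Delta>"
  shows "\<bar>f x - f y\<bar> \<le> 2 * C * dist1 x y"
proof -
  obtain W where W: "\<And>i k. W i $ k = x $ k \<or> W i $ k = y $ k"
    and eq: "f x - f y = (\<Sum>i\<in>UNIV. (x $ i - y $ i) * coord_slope i f (W i))"
    using multiaffine_telescope[OF f] by blast
  have "\<bar>f x - f y\<bar> \<le> (\<Sum>i\<in>UNIV. \<bar>x $ i - y $ i\<bar> * \<bar>coord_slope i f (W i)\<bar>)"
    unfolding eq abs_mult[symmetric] by (rule sum_abs)
  also have "\<dots> \<le> (\<Sum>i\<in>UNIV. \<bar>x $ i - y $ i\<bar> * (2 * C))"
    using coord_slope_bound[OF bound between_in_Delta[OF x y W]]
    by (intro sum_mono mult_left_mono) auto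
  also have "\<dots> = 2 * C * dist1 x y"
    unfolding dist1_def sum_distrib_right[symmetric] by (rule mult.commute)
  finally show ?thesis .
qed

lemma multiaffine_linearization:
  assumes f: "multiaffine f" and bound: "\<forall>z\<in>\<Delta>. \<bar>f z\<bar> \<le> C"
    and s: "s \<in> \<Delta>" and x: "x \<in> \<Delta>" and y: "y \<in> \<Delta>"
  shows "\<bar>f x - f y - (\<Sum>i\<in>M. (x $ i - y $ i) * coord_slope i f s)\<bar>
     \<le> 4 * C * (dist1 x s + dist1 y s) * dist1 x y + 2 * C * (\<Sum>i\<in>-M. \<bar>x $ i - y $ i\<bar>)"
proof -
  obtain W where W: "\<And>i k. W i $ k = x $ k \<or> W i $ k = y $ k"
    and eq: "f x - f y = (\<Sum>i\<in>UNIV. (x $ i - y $ i) * coord_slope i f (W i))"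
    using multiaffine_telescope[OF f] by blast
  have slope_bound: "\<forall>z\<in>\<Delta>. \<bar>coord_slope i f z\<bar> \<le> 2 * C" for i
    using coord_slope_bound[OF bound] by blast
  have C0: "0 \<le> C" using bound s by fastforce
  have "(\<Sum>i\<in>UNIV. (x $ i - y $ i) * coord_slope i f s)
      = (\<Sum>i\<in>M. (x $ i - y $ i) * coord_slope i f s) + (\<Sum>i\<in>-M. (x $ i - y $ i) * coord_slope i f s)"
    by (rule sum_UNIV_split_Compl)
  then have split: "f x - f y - (\<Sum>i\<in>M. (x $ i - y $ i) * coord_slope i f s)
      = (\<Sum>i\<in>UNIV. (x $ i - y $ i) * (coord_slope i f (W i) - coord_slope i f s))
        + (\<Sum>i\<in>-M. (x $ i - y $ i) * coord_slope i f s)"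
    unfolding eq by (simp add: right_diff_distrib sum_subtractf)
  have "\<bar>\<Sum>i\<in>UNIV. (x $ i - y $ i) * (coord_slope i f (W i) - coord_slope i f s)\<bar>
      \<le> (\<Sum>i\<in>UNIV. \<bar>x $ i - y $ i\<bar> * (4 * C * (dist1 x s + dist1 y s)))"
  proof (rule order_trans[OF sum_abs], intro sum_mono, unfold abs_mult, intro mult_left_mono)
    fix i
    have "\<bar>coord_slope i f (W i) - coord_slope i f s\<bar> \<le> 2 * (2 * C) * dist1 (W i) s"
      using multiaffine_lipschitz[OF multiaffine_coord_slope[OF f] slope_bound
          between_in_Delta[OF x y W] s] .
    also have "\<dots> = 4 * C * dist1 (W i) s" by simp
    also have "\<dots> \<le> 4 * C * (dist1 x s + dist1 y s)"
      using dist1_between[OF W, of i s] C0 by (intro mult_left_mono) auto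
    finally show "\<bar>coord_slope i f (W i) - coord_slope i f s\<bar> \<le> 4 * C * (dist1 x s + dist1 y s)" .
  qed simp
  moreover have "\<bar>\<Sum>i\<in>-M. (x $ i - y $ i) * coord_slope i f s\<bar> \<le> (\<Sum>i\<in>-M. \<bar>x $ i - y $ i\<bar> * (2 * C))"
    using slope_bound s by (intro order_trans[OF sum_abs] sum_mono) (auto simp: abs_mult intro: mult_left_mono)
  ultimately show ?thesis
    unfolding split dist1_def[of x y] sum_distrib_right[symmetric]
    by (simp add: sum_distrib_left mult.commute mult.left_commute)
qed

lemma zfac_eq: "zfac k t = zfac k 0 + t * (zfac k 1 - zfac k 0)"
  by (cases k) (auto simp: zfac_def)

lemma zfac_bounds: "t \<in> {0..1} \<Longrightarrow> 0 \<le> zfac k t \<and> zfac k t \<le> 1"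
  by (cases k) (auto simp: zfac_def)

lemma continuous_on_zfac [continuous_intros]:
  "continuous_on S f \<Longrightarrow> continuous_on S (\<lambda>x. zfac k (f x))"
  by (cases k) (auto simp: zfac_def intro!: continuous_intros)

lemma continuous_on_Uext [continuous_intros]:
  "continuous_on S f \<Longrightarrow> continuous_on S (\<lambda>x. Uext u (f x))"
  unfolding Uext_def by (intro continuous_intros)

lemma Uext_upd:
  "Uext u (upd x i t) = (\<Sum>a\<in>UNIV. zfac (a i) t * ((\<Prod>j\<in>UNIV-{i}. zfac (a j) (x $ j)) * u a))"
proof -
  have "(\<Prod>j\<in>UNIV. zfac (a j) (upd x i t $ j)) = zfac (a i) t * (\<Prod>j\<in>UNIV-{i}. zfac (a j) (x $ j))"
    for a :: "'a \<Rightarrow> bool"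
    by (subst prod.remove[of UNIV i]) (auto simp: upd_nth intro!: prod.cong)
  then show ?thesis unfolding Uext_def by (simp add: mult.assoc)
qed

lemma multiaffine_Uext: "multiaffine (Uext u)"
  unfolding multiaffine_def
proof (intro allI)
  fix x :: "real^'a" and i t
  define Q where "Q a = (\<Prod>j\<in>UNIV-{i}. zfac (a j) (x $ j)) * u a" for a :: "'a \<Rightarrow> bool"
  have "Uext u (upd x i r) = (\<Sum>a\<in>UNIV. zfac (a i) 0 * Q a)
      + r * (\<Sum>a\<in>UNIV. (zfac (a i) 1 - zfac (a i) 0) * Q a)" for r
  proof -
    have "Uext u (upd x i r) = (\<Sum>a\<in>UNIV. zfac (a i) 0 * Q a + r * ((zfac (a i) 1 - zfac (a i) 0) * Q a))"
      unfolding Uext_upd Q_def by (intro sum.cong refl, subst zfac_eq) (simp only: distrib_right mult.assoc)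
    then show ?thesis by (simp only: sum.distrib sum_distrib_left)
  qed
  then show "Uext u (upd x i t) = Uext u (upd x i 0) + t * (Uext u (upd x i 1) - Uext u (upd x i 0))"
    by simp
qed

text \<open>The \<open>+ 1\<close> keeps the bound positive, so that it may appear in denominators.\<close>

definition pot_bound :: "(('n::finite \<Rightarrow> bool) \<Rightarrow> real) \<Rightarrow> real" where
  "pot_bound u = 1 + (\<Sum>a\<in>UNIV. \<bar>u a\<bar>)"

lemma pot_bound_ge_1: "1 \<le> pot_bound u"
  by (simp add: pot_bound_def sum_nonneg)

lemma Uext_bound: "x \<in> \<Delta> \<Longrightarrow> \<bar>Uext u x\<bar> \<le> pot_bound u"
proof -
  assume x: "x \<in> \<Delta>"
  have weight: "\<bar>\<Prod>i\<in>UNIV. zfac (a i) (x $ i)\<bar> \<le> 1" for a :: "'a \<Rightarrow> bool"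
    unfolding abs_prod using x zfac_bounds
    by (intro prod_le_1) (auto simp: mixed_profiles_def)
  have "\<bar>Uext u x\<bar> \<le> (\<Sum>a\<in>UNIV. \<bar>\<Prod>i\<in>UNIV. zfac (a i) (x $ i)\<bar> * \<bar>u a\<bar>)"
    unfolding Uext_def abs_mult[symmetric] by (rule sum_abs)
  also have "\<dots> \<le> (\<Sum>a\<in>UNIV. \<bar>u a\<bar>)"
    using weight by (intro sum_mono mult_left_le_one_le) auto
  finally show ?thesis by (simp add: pot_bound_def)
qed

definition dU :: "(('n::finite \<Rightarrow> bool) \<Rightarrow> real) \<Rightarrow> 'n \<Rightarrow> real^'n \<Rightarrow> real" where
  "dU u i = coord_slope i (Uext u)"

definition d2U :: "(('n::finite \<Rightarrow> bool) \<Rightarrow> real) \<Rightarrow> 'n \<Rightarrow> 'n \<Rightarrow> real^'n \<Rightarrow> real" where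
  "d2U u i j = coord_slope i (dU u j)"

lemma multiaffine_dU: "multiaffine (dU u i)"
  unfolding dU_def by (rule multiaffine_coord_slope[OF multiaffine_Uext])

lemma Uext_upd_diff: "Uext u (upd x i t) - Uext u x = (t - x $ i) * dU u i x"
  unfolding dU_def by (rule multiaffine_diff_eq[OF multiaffine_Uext])

lemma Upure_diff: "Upure u i True x - Upure u i False x = dU u i x"
  by (simp add: Upure_def dU_def coord_slope_def)

lemma continuous_on_dU [continuous_intros]:
  "continuous_on S f \<Longrightarrow> continuous_on S (\<lambda>x. dU u i (f x))"
  unfolding dU_def coord_slope_def by (intro continuous_intros)

lemma dU_bound: "\<forall>x\<in>\<Delta>. \<bar>dU u i x\<bar> \<le> 2 * pot_bound u"
  unfolding dU_def using coord_slope_bound Uext_bound by blast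

lemma dU_lipschitz:
  "x \<in> \<Delta> \<Longrightarrow> y \<in> \<Delta> \<Longrightarrow> \<bar>dU u j x - dU u j y\<bar> \<le> 4 * pot_bound u * dist1 x y"
  using multiaffine_lipschitz[OF multiaffine_dU dU_bound] by fastforce

lemma dU_linearization:
  assumes "s \<in> \<Delta>" "x \<in> \<Delta>" "y \<in> \<Delta>"
  shows "\<bar>dU u j x - dU u j y - (\<Sum>i\<in>M. (x $ i - y $ i) * d2U u i j s)\<bar>
     \<le> 8 * pot_bound u * (dist1 x s + dist1 y s) * dist1 x y
       + 4 * pot_bound u * (\<Sum>i\<in>-M. \<bar>x $ i - y $ i\<bar>)"
  using multiaffine_linearization[OF multiaffine_dU dU_bound assms, where M = M] by (simp add: d2U_def)

lemma partial_Uext: "partial i (Uext u) x = dU u i x"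
proof -
  have "(\<lambda>t. Uext u (upd x i t)) = (\<lambda>t. Uext u (upd x i 0) + t * dU u i x)"
    unfolding dU_def using multiaffine_upd_eq[OF multiaffine_Uext] by blast
  moreover have "((\<lambda>t. Uext u (upd x i 0) + t * dU u i x) has_real_derivative dU u i x) (at (x $ i))"
    by (auto intro!: derivative_eq_intros)
  ultimately show ?thesis unfolding partial_def by (simp add: DERIV_imp_deriv)
qed

lemma restr_hessian_eq_d2U: "restr_hessian u xs x i j = d2U u i j x"
proof -
  have "(\<lambda>t. dU u j (upd x i t)) = (\<lambda>t. dU u j (upd x i 0) + t * d2U u i j x)"
    unfolding d2U_def using multiaffine_upd_eq[OF multiaffine_dU] by blast
  moreover have "((\<lambda>t. dU u j (upd x i 0) + t * d2U u i j x) has_real_derivative d2U u i j x) (at (x $ i))"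
    by (auto intro!: derivative_eq_intros)
  ultimately show ?thesis
    unfolding restr_hessian_def partial_def[of i] partial_Uext[abs_def] by (simp add: DERIV_imp_deriv)
qed

subsection \<open>Nash equilibria and regret\<close>

lemma affine_max_at_iff:
  fixes d p :: real
  assumes "0 \<le> p" "p \<le> 1"
  shows "(\<forall>t\<in>{0..1}. (t - p) * d \<le> 0) \<longleftrightarrow> (0 < d \<longrightarrow> p = 1) \<and> (d < 0 \<longrightarrow> p = 0)"
proof
  assume max: "\<forall>t\<in>{0..1}. (t - p) * d \<le> 0"
  have "(1 - p) * d \<le> 0" "(0 - p) * d \<le> 0"
    using max[rule_format, of 1] max[rule_format, of 0] by auto
  then show "(0 < d \<longrightarrow> p = 1) \<and> (d < 0 \<longrightarrow> p = 0)"
    using assms by (auto simp: mult_le_0_iff zero_le_mult_iff)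
next
  assume "(0 < d \<longrightarrow> p = 1) \<and> (d < 0 \<longrightarrow> p = 0)"
  then show "\<forall>t\<in>{0..1}. (t - p) * d \<le> 0"
    by (cases d "0::real" rule: linorder_cases) (auto simp: mult_le_0_iff)
qed

lemma deviation_gain_eq_0_iff:
  fixes d p :: real
  assumes "0 \<le> p" "p \<le> 1"
  shows "max 0 d * (1 - p) + max 0 (- d) * p = 0 \<longleftrightarrow> (0 < d \<longrightarrow> p = 1) \<and> (d < 0 \<longrightarrow> p = 0)"
  using assms by (cases d "0::real" rule: linorder_cases) (auto simp: add_nonneg_eq_0_iff)
lemma NE_iff_dU:
  "x \<in> NE u \<longleftrightarrow> x \<in> \<Delta> \<and> (\<forall>i. (0 < dU u i x \<longrightarrow> x $ i = 1) \<and> (dU u i x < 0 \<longrightarrow> x $ i = 0))"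
proof -
  have dev: "Uext u (upd x i t) \<le> Uext u x \<longleftrightarrow> (t - x $ i) * dU u i x \<le> 0" for i t
    using Uext_upd_diff[of u x i t] by auto
  have "(\<forall>t\<in>{0..1}. Uext u (upd x i t) \<le> Uext u x)
      \<longleftrightarrow> (0 < dU u i x \<longrightarrow> x $ i = 1) \<and> (dU u i x < 0 \<longrightarrow> x $ i = 0)" if "x \<in> \<Delta>" for i
    using affine_max_at_iff[of "x $ i" "dU u i x"] that by (simp add: dev mixed_profiles_def)
  then show ?thesis by (auto simp: NE_def)
qed

lemma NE_mixing_dU_eq_0: "x \<in> NE u \<Longrightarrow> 0 < x $ i \<Longrightarrow> x $ i < 1 \<Longrightarrow> dU u i x = 0"
  unfolding NE_iff_dU by (metis less_irrefl linorder_neqE_linordered_idom)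

text \<open>Each summand is the gain of player \<open>i\<close> from its best unilateral deviation.\<close>

definition regret :: "(('n::finite \<Rightarrow> bool) \<Rightarrow> real) \<Rightarrow> real^'n \<Rightarrow> real" where
  "regret u x = (\<Sum>i\<in>UNIV. max 0 (dU u i x) * (1 - x $ i) + max 0 (- dU u i x) * x $ i)"

lemma deviation_gain_nonneg:
  fixes d p :: real
  shows "0 \<le> p \<Longrightarrow> p \<le> 1 \<Longrightarrow> 0 \<le> max 0 d * (1 - p) + max 0 (- d) * p"
  by (intro add_nonneg_nonneg mult_nonneg_nonneg) auto

lemma regret_nonneg: "x \<in> \<Delta> \<Longrightarrow> 0 \<le> regret u x"
  unfolding regret_def mixed_profiles_def by (intro sum_nonneg deviation_gain_nonneg) auto

lemma NE_iff_regret_eq_0: "x \<in> \<Delta> \<Longrightarrow> x \<in> NE u \<longleftrightarrow> regret u x = 0"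
  unfolding regret_def NE_iff_dU
  by (subst sum_nonneg_eq_0_iff) (auto simp: mixed_profiles_def deviation_gain_eq_0_iff deviation_gain_nonneg)

lemma continuous_on_regret: "continuous_on S (regret u)"
  unfolding regret_def by (intro continuous_intros)

lemma compact_NE: "compact (NE u)"
proof -
  have "NE u = \<Delta> \<inter> {x. regret u x = 0}"
    using NE_iff_regret_eq_0 by (auto simp: NE_def)
  moreover have "closed {x :: real^'a. regret u x = 0}"
    by (intro closed_Collect_eq continuous_on_regret continuous_intros)
  ultimately show ?thesis by (simp add: compact_Int_closed compact_Delta)
qed

definition logistic :: "real \<Rightarrow> real" where
  "logistic z = 1 / (1 + exp (- z))"

definition logit :: "real \<Rightarrow> real" where
  "logit t = ln t - ln (1 - t)"

lemma one_plus_exp_pos: "0 < 1 + exp (z :: real)"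
  by (simp add: add_pos_pos)

lemma logistic_pos: "0 < logistic z"
  by (simp add: logistic_def one_plus_exp_pos)

lemma logistic_less_1: "logistic z < 1"
  using one_plus_exp_pos[of "- z"] by (simp add: logistic_def divide_less_eq)

lemma one_minus_logistic_eq: "1 - logistic z = exp (- z) / (1 + exp (- z))"
  using one_plus_exp_pos[of "- z"] by (simp add: logistic_def field_simps)

lemma one_minus_logistic: "1 - logistic z = logistic (- z)"
  unfolding one_minus_logistic_eq logistic_def using one_plus_exp_pos[of z]
  by (simp add: exp_minus field_simps)

lemma one_minus_logistic_le_exp: "1 - logistic z \<le> exp (- z)"
  unfolding one_minus_logistic_eq using one_plus_exp_pos[of "- z"] by (simp add: divide_le_eq)

lemma logistic_le_exp: "logistic z \<le> exp z"
  using one_minus_logistic_le_exp[of "- z"] by (simp add: one_minus_logistic)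

lemma logistic_logit: "0 < t \<Longrightarrow> t < 1 \<Longrightarrow> logistic (logit t) = t"
  by (simp add: logistic_def logit_def exp_diff field_simps)

lemma logit_logistic: "logit (logistic z) = z"
  unfolding logit_def one_minus_logistic_eq using one_plus_exp_pos[of "- z"]
  by (simp add: logistic_def ln_div)

lemma continuous_on_logistic [continuous_intros]:
  "continuous_on S f \<Longrightarrow> continuous_on S (\<lambda>x. logistic (f x))"
  unfolding logistic_def using one_plus_exp_pos by (intro continuous_intros) (auto simp: order_less_imp_not_eq2)

lemma exp_neg_le_inverse_square: "0 < (w :: real) \<Longrightarrow> exp (- w) \<le> 2 / w\<^sup>2"
  using exp_lower_Taylor_quadratic[of w] by (simp add: exp_minus field_simps)

lemma mult_logistic_neg_le_1: "0 \<le> z \<Longrightarrow> z * logistic (- z) \<le> 1"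
proof -
  have "z \<le> 1 + exp z" using exp_ge_add_one_self[of z] exp_gt_zero[of z] by linarith
  then show ?thesis by (simp add: logistic_def divide_le_eq one_plus_exp_pos)
qed

lemma exp_neg_lipschitz:
  fixes a b c :: real
  assumes "c \<le> a" "c \<le> b"
  shows "\<bar>exp (- a) - exp (- b)\<bar> \<le> exp (- c) * \<bar>a - b\<bar>"
proof -
  have ordered: "exp (- p) - exp (- q) \<le> exp (- c) * (q - p)" if "c \<le> p" "p \<le> q" for p q :: real
  proof -
    have "exp (- p) - exp (- q) = exp (- p) * (1 - exp (p - q))"
      by (simp add: algebra_simps exp_diff exp_minus field_simps)
    also have "\<dots> \<le> exp (- p) * (q - p)"
      using exp_ge_add_one_self[of "p - q"] by (intro mult_left_mono) (linarith, simp)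
    also have "\<dots> \<le> exp (- c) * (q - p)"
      using that by (intro mult_right_mono) auto
    finally show ?thesis .
  qed
  show ?thesis
    using ordered[of a b] ordered[of b a] assms by (cases "a \<le> b") (auto simp: abs_if)
qed

lemma logistic_lipschitz_right:
  assumes "c \<le> a" "c \<le> b"
  shows "\<bar>logistic a - logistic b\<bar> \<le> exp (- c) * \<bar>a - b\<bar>"
proof -
  have pos: "0 < 1 + exp (- a)" "0 < 1 + exp (- b)" by (rule one_plus_exp_pos)+
  have "\<bar>logistic a - logistic b\<bar>
      = \<bar>exp (- a) - exp (- b)\<bar> / ((1 + exp (- a)) * (1 + exp (- b)))"
    using pos by (simp add: logistic_def field_simps abs_div abs_minus_commute)
  also have "\<dots> \<le> \<bar>exp (- a) - exp (- b)\<bar>"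
  proof -
    have "1 \<le> (1 + exp (- a)) * (1 + exp (- b))"
      using exp_gt_zero[of "- a"] exp_gt_zero[of "- b"] by (simp add: algebra_simps add_pos_pos)
    then show ?thesis by (simp add: divide_le_eq mult_le_cancel_left1)
  qed
  also have "\<dots> \<le> exp (- c) * \<bar>a - b\<bar>"
    by (rule exp_neg_lipschitz[OF assms])
  finally show ?thesis .
qed

lemma logistic_lipschitz_left:
  assumes "a \<le> - c" "b \<le> - c"
  shows "\<bar>logistic a - logistic b\<bar> \<le> exp (- c) * \<bar>a - b\<bar>"
  using logistic_lipschitz_right[of c "- a" "- b"] assms
  by (simp add: one_minus_logistic[symmetric] abs_minus_commute)

lemma ln_lipschitz:
  fixes a t t' :: real
  assumes "0 < a" "a \<le> t" "a \<le> t'"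
  shows "\<bar>ln t - ln t'\<bar> \<le> \<bar>t - t'\<bar> / a"
proof -
  have ordered: "ln p - ln q \<le> \<bar>p - q\<bar> / a" if "a \<le> p" "a \<le> q" for p q
  proof -
    have "ln p - ln q = ln (p / q)" using that assms by (simp add: ln_div)
    also have "\<dots> \<le> p / q - 1" using that assms by (intro ln_le_minus_one) auto
    also have "\<dots> = (p - q) / q" using that assms by (simp add: field_simps)
    also have "\<dots> \<le> \<bar>p - q\<bar> / q" using that assms by (intro divide_right_mono) auto
    also have "\<dots> \<le> \<bar>p - q\<bar> / a" using that assms by (intro divide_left_mono) auto
    finally show ?thesis .
  qed
  show ?thesis using ordered[of t t'] ordered[of t' t] assms by (simp add: abs_minus_commute abs_le_iff)
qed

lemma logit_lipschitz:
  fixes a t t' :: real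
  assumes "0 < a" "a \<le> t" "t \<le> 1 - a" "a \<le> t'" "t' \<le> 1 - a"
  shows "\<bar>logit t - logit t'\<bar> \<le> 2 / a * \<bar>t - t'\<bar>"
  using ln_lipschitz[of a t t'] ln_lipschitz[of a "1 - t" "1 - t'"] assms
  unfolding logit_def by (simp add: abs_minus_commute)

lemma logit_bound:
  fixes a t :: real
  assumes "0 < a" "a \<le> t" "t \<le> 1 - a"
  shows "\<bar>logit t\<bar> \<le> 2 / a"
proof -
  have "\<bar>ln p\<bar> \<le> 1 / a" if "a \<le> p" "p \<le> 1" for p
  proof -
    have "\<bar>ln 1 - ln p\<bar> \<le> \<bar>1 - p\<bar> / a" using ln_lipschitz[of a 1 p] that assms by simp
    also have "\<dots> \<le> 1 / a" using that assms by (intro divide_right_mono) auto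
    finally show ?thesis by simp
  qed
  then have "\<bar>ln t\<bar> + \<bar>ln (1 - t)\<bar> \<le> 1 / a + 1 / a" using assms by (intro add_mono) auto
  then show ?thesis
    unfolding logit_def using abs_triangle_ineq4[of "ln t" "ln (1 - t)"] by simp
qed

lemma logitBR_nth: "logitBR u lam x $ i = logistic (dU u i x / lam)"
proof -
  let ?a = "Upure u i True x / lam" and ?b = "Upure u i False x / lam"
  have "dU u i x / lam = ?a - ?b"
    unfolding Upure_diff[symmetric] by (rule diff_divide_distrib)
  moreover have "exp ?a / (exp ?a + exp ?b) = 1 / (1 + exp (- (?a - ?b)))"
    by (simp add: exp_diff field_simps)
  ultimately show ?thesis by (simp add: logitBR_def logistic_def)
qed

lemma ND_iff: "x \<in> ND u lam \<longleftrightarrow> x \<in> \<Delta> \<and> (\<forall>i. x $ i = logistic (dU u i x / lam))"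
  by (auto simp: ND_def vec_eq_iff logitBR_nth)

lemma ND_dU_eq: "0 < lam \<Longrightarrow> x \<in> ND u lam \<Longrightarrow> dU u i x = lam * logit (x $ i)"
  by (simp add: ND_iff logit_logistic)

lemma regret_ND_le:
  fixes x :: "real^'n::finite" and lam :: real
  assumes lam: "0 < lam" and x: "x \<in> ND u lam"
  shows "regret u x \<le> real CARD('n) * lam"
proof -
  have "max 0 (dU u i x) * (1 - x $ i) + max 0 (- dU u i x) * x $ i \<le> lam" for i
  proof -
    define z where "z = dU u i x / lam"
    have x_i: "x $ i = logistic z" and dU: "dU u i x = lam * z"
      using x lam by (simp_all add: ND_iff z_def)
    have "max 0 (dU u i x) * (1 - x $ i) + max 0 (- dU u i x) * x $ i = lam * (\<bar>z\<bar> * logistic (- \<bar>z\<bar>))"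
      unfolding x_i dU using lam by (cases "0 \<le> z") (simp_all add: one_minus_logistic max_def mult_le_0_iff zero_le_mult_iff)
    also have "\<dots> \<le> lam"
      using mult_logistic_neg_le_1[of "\<bar>z\<bar>"] lam by (simp add: mult_le_cancel_left1)
    finally show ?thesis .
  qed
  then have "regret u x \<le> (\<Sum>i\<in>(UNIV :: 'n set). lam)"
    unfolding regret_def by (intro sum_mono)
  then show ?thesis by simp
qed

lemma continuous_on_logitBR:
  "continuous_on ({0<..} \<times> UNIV) (\<lambda>p. logitBR u (fst p) (snd p))"
proof -
  have "exp a + exp b \<noteq> 0" for a b :: real by (simp add: add_pos_pos order_less_imp_not_eq2)
  then show ?thesis unfolding logitBR_def Upure_def by (intro continuous_intros) auto
qed

definition abs_sum :: "'a set \<Rightarrow> ('a \<Rightarrow> 'a \<Rightarrow> real) \<Rightarrow> real" where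
  "abs_sum M G = (\<Sum>i\<in>M. \<Sum>j\<in>M. \<bar>G i j\<bar>)"

lemma abs_sum_nonneg: "0 \<le> abs_sum M G"
  by (simp add: abs_sum_def sum_nonneg)

lemma abs_sum_mult_bound:
  assumes "finite M"
  shows "(\<Sum>k\<in>M. \<bar>\<Sum>j\<in>M. r j * G j k\<bar>) \<le> abs_sum M G * (\<Sum>j\<in>M. \<bar>r j\<bar>)"
proof -
  have "(\<Sum>k\<in>M. \<bar>\<Sum>j\<in>M. r j * G j k\<bar>) \<le> (\<Sum>k\<in>M. \<Sum>j\<in>M. \<bar>r j\<bar> * \<bar>G j k\<bar>)"
    by (intro sum_mono order_trans[OF sum_abs]) (simp add: abs_mult)
  also have "\<dots> = (\<Sum>j\<in>M. \<bar>r j\<bar> * (\<Sum>k\<in>M. \<bar>G j k\<bar>))"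
    by (subst sum.swap) (simp add: sum_distrib_left)
  also have "\<dots> \<le> (\<Sum>j\<in>M. \<bar>r j\<bar> * abs_sum M G)"
    using assms unfolding abs_sum_def
    by (intro sum_mono mult_left_mono member_le_sum[of _ M "\<lambda>j. \<Sum>k\<in>M. \<bar>G j k\<bar>"]) (auto intro: sum_nonneg)
  also have "\<dots> = abs_sum M G * (\<Sum>j\<in>M. \<bar>r j\<bar>)"
    by (simp add: sum_distrib_left mult.commute)
  finally show ?thesis .
qed

lemma row_mult_right_inverse:
  fixes H G :: "'a \<Rightarrow> 'a \<Rightarrow> real"
  assumes "finite M" and inverse: "\<And>i k. i \<in> M \<Longrightarrow> k \<in> M \<Longrightarrow> (\<Sum>j\<in>M. H i j * G j k) = (if i = k then 1 else 0)"
    and "k \<in> M"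
  shows "(\<Sum>j\<in>M. (\<Sum>i\<in>M. v i * H i j) * G j k) = v k"
proof -
  have "(\<Sum>j\<in>M. (\<Sum>i\<in>M. v i * H i j) * G j k) = (\<Sum>j\<in>M. \<Sum>i\<in>M. v i * (H i j * G j k))"
    by (simp add: sum_distrib_right mult.assoc)
  also have "\<dots> = (\<Sum>i\<in>M. v i * (\<Sum>j\<in>M. H i j * G j k))"
    by (subst sum.swap) (simp add: sum_distrib_left)
  also have "\<dots> = (\<Sum>i\<in>M. v i * (if i = k then 1 else 0))"
    using inverse \<open>k \<in> M\<close> by (intro sum.cong) auto
  finally show ?thesis using assms(1,3) by (simp add: if_distrib sum.delta cong: if_cong)
qed

lemma right_inverse_bound:
  fixes H G :: "'a \<Rightarrow> 'a \<Rightarrow> real"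
  assumes "finite M" and "\<And>i k. i \<in> M \<Longrightarrow> k \<in> M \<Longrightarrow> (\<Sum>j\<in>M. H i j * G j k) = (if i = k then 1 else 0)"
  shows "(\<Sum>k\<in>M. \<bar>v k\<bar>) \<le> abs_sum M G * (\<Sum>j\<in>M. \<bar>\<Sum>i\<in>M. v i * H i j\<bar>)"
  using abs_sum_mult_bound[OF assms(1), of "\<lambda>j. \<Sum>i\<in>M. v i * H i j" G]
  by (simp add: row_mult_right_inverse[OF assms])

subsection \<open>Local analysis at a regular equilibrium\<close>

lemma eventually_mult_power_le_at_right_0:
  fixes C b :: real
  assumes "0 < b" "0 < n"
  shows "\<forall>\<^sub>F t in at_right 0. C * t ^ n \<le> b"
proof -
  have "((\<lambda>t. C * t ^ n) \<longlongrightarrow> C * 0 ^ n) (at_right 0)" by (intro tendsto_intros)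
  then have "((\<lambda>t. C * t ^ n) \<longlongrightarrow> 0) (at_right 0)" using assms(2) by (simp add: zero_power)
  then have "\<forall>\<^sub>F t in at_right 0. C * t ^ n < b" using assms by (intro order_tendstoD(2)) auto
  then show ?thesis by eventually_elim simp
qed

lemma finite_positive_lower_bound:
  fixes f :: "'a \<Rightarrow> real"
  assumes "finite A" "\<And>j. j \<in> A \<Longrightarrow> 0 < f j"
  obtains b where "0 < b" "\<And>j. j \<in> A \<Longrightarrow> b \<le> f j"
proof
  show "0 < Min (insert 1 (f ` A))" using assms by (subst Min_gr_iff) auto
qed (use assms in auto)

locale regular_equilibrium =
  fixes u :: "('n::finite \<Rightarrow> bool) \<Rightarrow> real" and s :: "real^'n"
    and a c :: real and G :: "'n \<Rightarrow> 'n \<Rightarrow> real"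
  assumes s_in_Delta: "s \<in> \<Delta>" and a_pos: "0 < a" and c_pos: "0 < c"
    and mixing_margin: "\<And>j. j \<in> mixing_players s \<Longrightarrow> 2 * a \<le> s $ j \<and> s $ j \<le> 1 - 2 * a"
    and mixing_indifferent: "\<And>j. j \<in> mixing_players s \<Longrightarrow> dU u j s = 0"
    and pure_strict: "\<And>k. k \<notin> mixing_players s \<Longrightarrow>
      (s $ k = 1 \<and> c \<le> dU u k s) \<or> (s $ k = 0 \<and> dU u k s \<le> - c)"
    and hessian_right_inverse: "\<And>i k. i \<in> mixing_players s \<Longrightarrow> k \<in> mixing_players s \<Longrightarrow>
      (\<Sum>j\<in>mixing_players s. d2U u i j s * G j k) = (if i = k then 1 else 0)"
    and hessian_left_inverse: "\<And>i k. i \<in> mixing_players s \<Longrightarrow> k \<in> mixing_players s \<Longrightarrow>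
      (\<Sum>j\<in>mixing_players s. G i j * d2U u j k s) = (if i = k then 1 else 0)"

lemma regular_NE_imp_regular_equilibrium:
  assumes s: "s \<in> NE u" and reg: "regular_NE u s"
  obtains a c G where "regular_equilibrium u s a c G"
proof -
  let ?M = "mixing_players s"
  have s_Delta: "s \<in> \<Delta>" using s by (simp add: NE_def)
  obtain G where right: "\<And>i k. i \<in> ?M \<Longrightarrow> k \<in> ?M \<Longrightarrow> (\<Sum>j\<in>?M. d2U u i j s * G j k) = (if i = k then 1 else 0)"
    and left: "\<And>i k. i \<in> ?M \<Longrightarrow> k \<in> ?M \<Longrightarrow> (\<Sum>j\<in>?M. G i j * d2U u j k s) = (if i = k then 1 else 0)"
    using reg unfolding regular_NE_def invertible_on_def restr_hessian_eq_d2U by blast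
  obtain a where a: "0 < a" "\<And>j. j \<in> ?M \<Longrightarrow> a \<le> min (s $ j) (1 - s $ j) / 2"
    by (rule finite_positive_lower_bound[of ?M "\<lambda>j. min (s $ j) (1 - s $ j) / 2"])
       (auto simp: mixing_players_def)
  have pure: "(s $ k = 1 \<and> 0 < dU u k s) \<or> (s $ k = 0 \<and> dU u k s < 0)" if "k \<notin> ?M" for k
  proof -
    have "0 \<le> s $ k \<and> s $ k \<le> 1" using s_Delta by (simp add: mixed_profiles_def)
    then have "s $ k = 0 \<or> s $ k = 1" using that by (auto simp: mixing_players_def)
    moreover have "s $ k = 1 \<longrightarrow> 0 < dU u k s" "s $ k = 0 \<longrightarrow> dU u k s < 0"
      using reg Upure_diff[of u k s] unfolding regular_NE_def quasi_strict_def by auto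
    ultimately show ?thesis by auto
  qed
  obtain c where c: "0 < c" "\<And>k. k \<in> -?M \<Longrightarrow> c \<le> \<bar>dU u k s\<bar>"
  proof (rule finite_positive_lower_bound[of "-?M" "\<lambda>k. \<bar>dU u k s\<bar>"])
    show "0 < \<bar>dU u k s\<bar>" if "k \<in> -?M" for k using pure[of k] that by auto
  qed auto
  have "regular_equilibrium u s a c G"
  proof
    fix j assume "j \<in> ?M"
    then show "2 * a \<le> s $ j \<and> s $ j \<le> 1 - 2 * a" "dU u j s = 0"
      using a(2)[of j] NE_mixing_dU_eq_0[OF s] by (auto simp: mixing_players_def)
  next
    fix k assume "k \<notin> ?M"
    then show "(s $ k = 1 \<and> c \<le> dU u k s) \<or> (s $ k = 0 \<and> dU u k s \<le> - c)"
      using pure[of k] c(2)[of k] by force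
  qed (use s_Delta a(1) c(1) right left in auto)
  then show ?thesis by (rule that)
qed

context regular_equilibrium
begin

abbreviation M :: "'n set" where "M \<equiv> mixing_players s"
abbreviation B :: real where "B \<equiv> pot_bound u"
abbreviation K :: real where "K \<equiv> abs_sum M G"

definition radius :: real where
  "radius = min a (min (c / (8 * B)) (1 / (64 * (K * card M + 1) * B)))"

lemma B_pos: "0 < B"
  using pot_bound_ge_1[of u] by linarith

lemma hessian_denominator_pos: "0 < 64 * (K * card M + 1) * B"
proof -
  have "0 \<le> K * card M" using abs_sum_nonneg[of M G] by simp
  then show ?thesis using B_pos by (intro mult_pos_pos) auto
qed

lemma radius_pos: "0 < radius"
  using a_pos c_pos B_pos hessian_denominator_pos by (simp add: radius_def)

lemma radius_le_a: "radius \<le> a"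
  by (simp add: radius_def)

lemma radius_gap: "4 * B * radius \<le> c / 2"
proof -
  have "radius \<le> c / (8 * B)" by (simp add: radius_def)
  then show ?thesis using B_pos by (simp add: pos_le_divide_eq algebra_simps)
qed

lemma radius_hessian: "64 * (K * card M) * B * radius \<le> 1"
proof -
  have "64 * (K * card M) * B * radius \<le> 64 * (K * card M + 1) * B * radius"
    using B_pos radius_pos by (intro mult_right_mono) auto
  also have "\<dots> \<le> 1"
  proof -
    have "radius \<le> 1 / (64 * (K * card M + 1) * B)" by (simp add: radius_def)
    then show ?thesis using hessian_denominator_pos by (simp add: pos_le_divide_eq mult.commute)
  qed
  finally show ?thesis .
qed

lemma near_mixing:
  assumes "dist1 x s \<le> radius" "j \<in> M"
  shows "a \<le> x $ j \<and> x $ j \<le> 1 - a"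
  using coord_le_dist1[of x j s] assms radius_le_a mixing_margin[of j] by (auto simp: abs_le_iff)

lemma near_pure:
  assumes "x \<in> \<Delta>" "dist1 x s \<le> radius" "k \<notin> M"
  shows "(s $ k = 1 \<and> c / 2 \<le> dU u k x) \<or> (s $ k = 0 \<and> dU u k x \<le> - c / 2)"
proof -
  have "\<bar>dU u k x - dU u k s\<bar> \<le> 4 * B * dist1 x s"
    by (rule dU_lipschitz[OF assms(1) s_in_Delta])
  also have "\<dots> \<le> 4 * B * radius"
    using assms(2) B_pos by (intro mult_left_mono) auto
  finally have "\<bar>dU u k x - dU u k s\<bar> \<le> 4 * B * radius" .
  then show ?thesis using radius_gap pure_strict[OF assms(3)] by auto
qed

lemma mixing_dist1_bound:
  assumes x: "x \<in> \<Delta>" and y: "y \<in> \<Delta>"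
  shows "(\<Sum>i\<in>M. \<bar>x $ i - y $ i\<bar>) \<le> K * (\<Sum>j\<in>M. \<bar>dU u j x - dU u j y\<bar>)
     + K * card M * (8 * B * (dist1 x s + dist1 y s) * dist1 x y + 4 * B * (\<Sum>i\<in>-M. \<bar>x $ i - y $ i\<bar>))"
proof -
  define L where "L = 8 * B * (dist1 x s + dist1 y s) * dist1 x y + 4 * B * (\<Sum>i\<in>-M. \<bar>x $ i - y $ i\<bar>)"
  have "(\<Sum>i\<in>M. \<bar>x $ i - y $ i\<bar>) \<le> K * (\<Sum>j\<in>M. \<bar>\<Sum>i\<in>M. (x $ i - y $ i) * d2U u i j s\<bar>)"
    by (rule right_inverse_bound[OF finite]) (rule hessian_right_inverse)
  also have "\<dots> \<le> K * (\<Sum>j\<in>M. \<bar>dU u j x - dU u j y\<bar> + L)"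
  proof (intro mult_left_mono sum_mono abs_sum_nonneg)
    fix j
    have "\<bar>dU u j x - dU u j y - (\<Sum>i\<in>M. (x $ i - y $ i) * d2U u i j s)\<bar> \<le> L"
      unfolding L_def by (rule dU_linearization[OF s_in_Delta x y])
    then show "\<bar>\<Sum>i\<in>M. (x $ i - y $ i) * d2U u i j s\<bar> \<le> \<bar>dU u j x - dU u j y\<bar> + L"
      by linarith
  qed
  also have "\<dots> = K * (\<Sum>j\<in>M. \<bar>dU u j x - dU u j y\<bar>) + K * card M * L"
    by (simp add: sum.distrib algebra_simps)
  finally show ?thesis unfolding L_def .
qed

lemma NE_isolated:
  assumes y: "y \<in> NE u" and near: "dist1 y s \<le> radius"
  shows "y = s"
proof -
  have y_Delta: "y \<in> \<Delta>" using y by (simp add: NE_def)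
  have "dU u j y = 0" if "j \<in> M" for j
    using near_mixing[OF near that] a_pos NE_mixing_dU_eq_0[OF y, of j] by simp
  moreover have "y $ k = s $ k" if "k \<notin> M" for k
    using near_pure[OF y_Delta near that] y c_pos unfolding NE_iff_dU by force
  ultimately have "dist1 y s \<le> K * card M * (8 * B * dist1 y s * dist1 y s)"
    using mixing_dist1_bound[OF y_Delta s_in_Delta] mixing_indifferent dist1_split[of y s M]
    by (simp add: dist1_commute)
  also have "\<dots> = (8 * (K * card M) * B * dist1 y s) * dist1 y s"
    by (simp add: algebra_simps)
  also have "\<dots> \<le> (8 * (K * card M) * B * radius) * dist1 y s"
    using near abs_sum_nonneg[of M G] B_pos dist1_nonneg[of y s]
    by (intro mult_right_mono mult_left_mono) auto
  also have "\<dots> \<le> 1 / 8 * dist1 y s"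
    using radius_hessian dist1_nonneg[of y s] by (intro mult_right_mono) auto
  finally show ?thesis using dist1_nonneg[of y s] dist1_le_0_iff by force
qed

lemma ND_mixing_dU_diff:
  assumes lam: "0 < lam"
    and x: "x \<in> ND u lam" "dist1 x s \<le> radius" and y: "y \<in> ND u lam" "dist1 y s \<le> radius"
  shows "(\<Sum>j\<in>M. \<bar>dU u j x - dU u j y\<bar>) \<le> 2 * lam / a * (\<Sum>j\<in>M. \<bar>x $ j - y $ j\<bar>)"
proof -
  have "\<bar>dU u j x - dU u j y\<bar> \<le> 2 * lam / a * \<bar>x $ j - y $ j\<bar>" if "j \<in> M" for j
  proof -
    have "\<bar>dU u j x - dU u j y\<bar> = lam * \<bar>logit (x $ j) - logit (y $ j)\<bar>"
      using ND_dU_eq[OF lam x(1)] ND_dU_eq[OF lam y(1)] lam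
      by (simp add: right_diff_distrib[symmetric] abs_mult)
    also have "\<dots> \<le> lam * (2 / a * \<bar>x $ j - y $ j\<bar>)"
      using near_mixing[OF x(2) that] near_mixing[OF y(2) that] a_pos lam
      by (intro mult_left_mono logit_lipschitz) auto
    finally show ?thesis by (simp add: mult_ac)
  qed
  then show ?thesis by (simp add: sum_distrib_left sum_mono)
qed

lemma ND_pure_coord_diff:
  assumes lam: "0 < lam"
    and x: "x \<in> ND u lam" "dist1 x s \<le> radius" and y: "y \<in> ND u lam" "dist1 y s \<le> radius"
    and k: "k \<notin> M"
  shows "\<bar>x $ k - y $ k\<bar> \<le> 32 * B * lam / c\<^sup>2 * dist1 x y"
proof -
  define w where "w = c / (2 * lam)"
  have w_pos: "0 < w" using c_pos lam by (simp add: w_def)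
  have x_k: "x $ k = logistic (dU u k x / lam)" and y_k: "y $ k = logistic (dU u k y / lam)"
    using x(1) y(1) by (simp_all add: ND_iff)
  have x_Delta: "x \<in> \<Delta>" and y_Delta: "y \<in> \<Delta>" using x(1) y(1) by (simp_all add: ND_iff)
  have scaled: "w \<le> dU u k z / lam \<longleftrightarrow> c / 2 \<le> dU u k z" "dU u k z / lam \<le> - w \<longleftrightarrow> dU u k z \<le> - c / 2" for z
    using lam by (simp_all add: w_def field_simps)
  have "\<bar>x $ k - y $ k\<bar> \<le> exp (- w) * \<bar>dU u k x / lam - dU u k y / lam\<bar>"
    using near_pure[OF x_Delta x(2) k] near_pure[OF y_Delta y(2) k]
    unfolding x_k y_k scaled[symmetric]
    by (auto intro: logistic_lipschitz_right logistic_lipschitz_left)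
  also have "\<dots> \<le> 8 * lam\<^sup>2 / c\<^sup>2 * (4 * B * dist1 x y / lam)"
  proof (rule mult_mono)
    show "exp (- w) \<le> 8 * lam\<^sup>2 / c\<^sup>2"
      using exp_neg_le_inverse_square[OF w_pos] lam c_pos by (simp add: w_def power2_eq_square)
    show "\<bar>dU u k x / lam - dU u k y / lam\<bar> \<le> 4 * B * dist1 x y / lam"
      using dU_lipschitz[OF x_Delta y_Delta, of u k] lam
      by (simp add: diff_divide_distrib[symmetric] divide_right_mono)
  qed auto
  also have "\<dots> = 32 * B * lam / c\<^sup>2 * dist1 x y"
    using lam by (simp add: field_simps power2_eq_square)
  finally show ?thesis .
qed

lemma near_curvature_bound:
  assumes "dist1 x s \<le> radius" "dist1 y s \<le> radius"
  shows "K * card M * (8 * B * (dist1 x s + dist1 y s) * dist1 x y) \<le> dist1 x y / 4"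
proof -
  have "K * card M * (8 * B * (dist1 x s + dist1 y s) * dist1 x y)
      = (8 * (K * card M) * B * dist1 x y) * (dist1 x s + dist1 y s)"
    by (simp add: algebra_simps)
  also have "\<dots> \<le> (8 * (K * card M) * B * dist1 x y) * (2 * radius)"
    using assms abs_sum_nonneg[of M G] B_pos dist1_nonneg[of x y] by (intro mult_left_mono) auto
  also have "\<dots> = (64 * (K * card M) * B * radius) * dist1 x y / 4"
    by (simp add: algebra_simps)
  also have "\<dots> \<le> dist1 x y / 4"
    using mult_right_mono[OF radius_hessian dist1_nonneg[of x y]] by (simp add: mult_ac)
  finally show ?thesis .
qed

text \<open>Through the inverse Hessian, the mixing coordinates of two solutions are controlled by their
  payoff differences, which are of order \<open>lam\<close>; their pure coordinates differ by \<open>O(lam)\<close> times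
  their distance. Hence their distance is at most three quarters of itself.\<close>

lemma ND_unique_near:
  assumes lam: "0 < lam" and small_mixing: "8 * K * lam \<le> a"
    and small_pure: "128 * (4 * (K * card M) * B + 1) * card (-M) * B * lam \<le> c\<^sup>2"
    and x: "x \<in> ND u lam" "dist1 x s \<le> radius" and y: "y \<in> ND u lam" "dist1 y s \<le> radius"
  shows "x = y"
proof -
  define dM where "dM = (\<Sum>i\<in>M. \<bar>x $ i - y $ i\<bar>)"
  define dP where "dP = (\<Sum>i\<in>-M. \<bar>x $ i - y $ i\<bar>)"
  define d where "d = dist1 x y"
  define A where "A = K * card M"
  have d: "d = dM + dP" "0 \<le> dM" "0 \<le> dP"
    unfolding d_def dM_def dP_def by (simp_all add: dist1_split sum_nonneg)
  have A: "0 \<le> A" using abs_sum_nonneg[of M G] by (simp add: A_def)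
  have x_Delta: "x \<in> \<Delta>" and y_Delta: "y \<in> \<Delta>" using x(1) y(1) by (simp_all add: ND_iff)
  have "K * (\<Sum>j\<in>M. \<bar>dU u j x - dU u j y\<bar>) \<le> K * (2 * lam / a * dM)"
    using ND_mixing_dU_diff[OF lam x y] abs_sum_nonneg[of M G] unfolding dM_def by (rule mult_left_mono)
  also have "\<dots> \<le> dM / 4"
    using mult_right_mono[OF small_mixing d(2)] a_pos by (simp add: field_simps)
  finally have mixing: "K * (\<Sum>j\<in>M. \<bar>dU u j x - dU u j y\<bar>) \<le> dM / 4" .
  have curvature: "A * (8 * B * (dist1 x s + dist1 y s) * d) \<le> d / 4"
    using near_curvature_bound[OF x(2) y(2)] by (simp add: A_def d_def)
  have "dP \<le> card (-M) * (32 * B * lam / c\<^sup>2 * d)"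
    using ND_pure_coord_diff[OF lam x y] unfolding dP_def d_def by (intro sum_bounded_above) auto
  then have "(4 * A * B + 1) * dP \<le> (4 * A * B + 1) * (card (-M) * (32 * B * lam / c\<^sup>2 * d))"
    using A B_pos by (intro mult_left_mono) auto
  also have "\<dots> = (128 * (4 * A * B + 1) * card (-M) * B * lam / c\<^sup>2) * d / 4"
    using c_pos by (simp add: field_simps)
  also have "\<dots> \<le> 1 * d / 4"
  proof -
    have "128 * (4 * A * B + 1) * card (-M) * B * lam / c\<^sup>2 \<le> 1"
      using small_pure c_pos by (simp add: A_def pos_divide_le_eq)
    then show ?thesis using d by (intro divide_right_mono mult_right_mono) auto
  qed
  finally have pure: "(4 * A * B + 1) * dP \<le> d / 4" by simp
  have "dM \<le> K * (\<Sum>j\<in>M. \<bar>dU u j x - dU u j y\<bar>) + A * (8 * B * (dist1 x s + dist1 y s) * d + 4 * B * dP)"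
    using mixing_dist1_bound[OF x_Delta y_Delta] by (simp add: A_def dM_def dP_def d_def)
  then have "d \<le> 3 / 4 * d"
    using mixing curvature pure d by (simp add: algebra_simps)
  then show ?thesis using d dist1_le_0_iff[of x y] by (simp add: d_def)
qed

lemma ND_eventually_unique_near:
  "\<forall>\<^sub>F lam in at_right 0. \<forall>x\<in>ND u lam. \<forall>y\<in>ND u lam.
     dist1 x s \<le> radius \<longrightarrow> dist1 y s \<le> radius \<longrightarrow> x = y"
proof -
  have "\<forall>\<^sub>F lam in at_right 0. 128 * (4 * (K * card M) * B + 1) * card (-M) * B * lam ^ 1 \<le> c\<^sup>2"
    using c_pos by (intro eventually_mult_power_le_at_right_0) auto
  with eventually_at_right_less[of 0] eventually_mult_power_le_at_right_0[OF a_pos zero_less_one, of "8 * K"]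
  show ?thesis by eventually_elim (auto intro: ND_unique_near)
qed

definition residual :: "'n \<Rightarrow> real^'n \<Rightarrow> real" where
  "residual j x = dU u j x - (\<Sum>i\<in>M. (x $ i - s $ i) * d2U u i j s)"

text \<open>On the mixing coordinates the logit equation \<open>dU u j x = lam * logit (x $ j)\<close> is solved for
  the linear part of \<open>dU\<close> with the inverse Hessian, which turns it into a fixed-point equation.\<close>

definition fixpoint_map :: "real \<Rightarrow> real^'n \<Rightarrow> real^'n" where
  "fixpoint_map lam x = (\<chi> i. if i \<in> M
      then s $ i + (\<Sum>l\<in>M. (lam * logit (x $ l) - residual l x) * G l i)
      else logistic (dU u i x / lam))"

lemma residual_bound:
  assumes "x \<in> \<Delta>" "j \<in> M"
  shows "\<bar>residual j x\<bar> \<le> 8 * B * dist1 x s * dist1 x s + 4 * B * (\<Sum>i\<in>-M. \<bar>x $ i - s $ i\<bar>)"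
  using dU_linearization[OF s_in_Delta assms(1) s_in_Delta, of u j M] mixing_indifferent[OF assms(2)]
  by (simp add: residual_def)

lemma fixpoint_map_fixed_point_in_ND:
  assumes lam: "0 < lam" and x: "x \<in> \<Delta>" "dist1 x s \<le> radius" and fixed: "fixpoint_map lam x = x"
  shows "x \<in> ND u lam"
proof -
  have "x $ i = logistic (dU u i x / lam)" for i
  proof (cases "i \<in> M")
    case True
    define q where "q l = lam * logit (x $ l) - residual l x" for l
    have "x $ j - s $ j = (\<Sum>l\<in>M. q l * G l j)" if "j \<in> M" for j
      using arg_cong[OF fixed, of "\<lambda>y. y $ j"] that by (simp add: fixpoint_map_def q_def)
    then have "(\<Sum>j\<in>M. (x $ j - s $ j) * d2U u j i s) = q i"
      using row_mult_right_inverse[OF finite hessian_left_inverse True, of q] by simp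
    then have "dU u i x = lam * logit (x $ i)"
      by (simp add: q_def residual_def)
    then have "dU u i x / lam = logit (x $ i)"
      using lam by simp
    moreover have "0 < x $ i" "x $ i < 1" using near_mixing[OF x(2) True] a_pos by auto
    ultimately show ?thesis by (simp add: logistic_logit)
  next
    case False
    then show ?thesis using arg_cong[OF fixed, of "\<lambda>y. y $ i"] by (simp add: fixpoint_map_def)
  qed
  then show ?thesis using x(1) by (simp add: ND_iff)
qed

lemma fixpoint_map_pure_close:
  assumes lam: "0 < lam" and x: "x \<in> \<Delta>" "dist1 x s \<le> radius" and k: "k \<notin> M"
  shows "\<bar>fixpoint_map lam x $ k - s $ k\<bar> \<le> 8 * lam\<^sup>2 / c\<^sup>2"
proof -
  define w where "w = c / (2 * lam)"
  have w_pos: "0 < w" using c_pos lam by (simp add: w_def)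
  have "\<bar>logistic (dU u k x / lam) - s $ k\<bar> \<le> exp (- w)"
    using near_pure[OF x k]
  proof (elim disjE conjE)
    assume "s $ k = 1" "c / 2 \<le> dU u k x"
    then have "exp (- (dU u k x / lam)) \<le> exp (- w)" using lam by (simp add: w_def field_simps)
    then show ?thesis
      using \<open>s $ k = 1\<close> one_minus_logistic_le_exp[of "dU u k x / lam"] logistic_less_1[of "dU u k x / lam"]
      by (intro abs_leI) linarith+
  next
    assume "s $ k = 0" "dU u k x \<le> - c / 2"
    then have "exp (dU u k x / lam) \<le> exp (- w)" using lam by (simp add: w_def field_simps)
    then show ?thesis
      using \<open>s $ k = 0\<close> logistic_le_exp[of "dU u k x / lam"] logistic_pos[of "dU u k x / lam"]
      by (intro abs_leI) linarith+
  qed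
  also have "exp (- w) \<le> 8 * lam\<^sup>2 / c\<^sup>2"
    using exp_neg_le_inverse_square[OF w_pos] lam c_pos by (simp add: w_def power2_eq_square)
  finally show ?thesis using k by (simp add: fixpoint_map_def)
qed

lemma fixpoint_map_mixing_close:
  assumes lam: "0 < lam" and x: "x \<in> \<Delta>" "dist1 x s \<le> radius"
  shows "(\<Sum>i\<in>M. \<bar>fixpoint_map lam x $ i - s $ i\<bar>)
    \<le> K * card M * (2 * lam / a + 8 * B * dist1 x s * dist1 x s + 4 * B * (\<Sum>i\<in>-M. \<bar>x $ i - s $ i\<bar>))"
proof -
  define q where "q l = lam * logit (x $ l) - residual l x" for l
  have "\<bar>q l\<bar> \<le> 2 * lam / a + 8 * B * dist1 x s * dist1 x s + 4 * B * (\<Sum>i\<in>-M. \<bar>x $ i - s $ i\<bar>)"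
    if "l \<in> M" for l
  proof -
    have "\<bar>logit (x $ l)\<bar> \<le> 2 / a" using near_mixing[OF x(2) that] a_pos by (intro logit_bound) auto
    then have "lam * \<bar>logit (x $ l)\<bar> \<le> lam * (2 / a)"
      using lam by (intro mult_left_mono) auto
    then have "\<bar>lam * logit (x $ l)\<bar> \<le> 2 * lam / a"
      using lam by (simp add: abs_mult mult.commute)
    then show ?thesis using residual_bound[OF x(1) that] by (simp add: q_def)
  qed
  then have sum_q: "(\<Sum>l\<in>M. \<bar>q l\<bar>) \<le> card M * (2 * lam / a + 8 * B * dist1 x s * dist1 x s
      + 4 * B * (\<Sum>i\<in>-M. \<bar>x $ i - s $ i\<bar>))"
    by (intro sum_bounded_above) auto
  have "(\<Sum>i\<in>M. \<bar>fixpoint_map lam x $ i - s $ i\<bar>) \<le> K * (\<Sum>l\<in>M. \<bar>q l\<bar>)"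
    using abs_sum_mult_bound[OF finite, where r = q and G = G] by (simp add: fixpoint_map_def q_def)
  also have "\<dots> \<le> K * (card M * (2 * lam / a + 8 * B * dist1 x s * dist1 x s
      + 4 * B * (\<Sum>i\<in>-M. \<bar>x $ i - s $ i\<bar>)))"
    using sum_q abs_sum_nonneg by (rule mult_left_mono)
  finally show ?thesis by (simp add: mult.assoc)
qed

definition pure_tol :: "real \<Rightarrow> real" where
  "pure_tol r = r / (64 * (K * card M + 1) * B * (real (card (-M)) + 1))"

definition nbhd :: "real \<Rightarrow> (real^'n) set" where
  "nbhd r = {x \<in> \<Delta>. (\<Sum>i\<in>M. \<bar>x $ i - s $ i\<bar>) \<le> r / 2 \<and> (\<forall>k\<in>-M. \<bar>x $ k - s $ k\<bar> \<le> pure_tol r)}"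

lemma pure_tol_bounds:
  assumes "0 < r"
  shows "0 < pure_tol r" "card (-M) * pure_tol r \<le> r / 64"
    "4 * (K * card M) * B * (card (-M) * pure_tol r) \<le> r / 16"
proof -
  define D where "D = 64 * (K * card M + 1) * B * (real (card (-M)) + 1)"
  have D: "0 < D" using hessian_denominator_pos by (simp add: D_def)
  have tol: "pure_tol r = r / D" by (simp add: pure_tol_def D_def)
  show "0 < pure_tol r" using assms D by (simp add: tol)
  have Km: "0 \<le> K * card M" using abs_sum_nonneg[of M G] by simp
  have "64 * real (card (-M)) \<le> 64 * 1 * (real (card (-M)) + 1)" by simp
  also have "\<dots> \<le> 64 * ((K * card M + 1) * B) * (real (card (-M)) + 1)"
    using mult_mono[of 1 "K * card M + 1" 1 B] Km pot_bound_ge_1[of u]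
    by (intro mult_right_mono mult_left_mono) auto
  finally have "64 * real (card (-M)) \<le> D" by (simp add: D_def algebra_simps)
  then show "card (-M) * pure_tol r \<le> r / 64"
    using assms D by (simp add: tol field_simps mult_left_mono)
  have "K * card M * B * card (-M) \<le> (K * card M + 1) * B * (real (card (-M)) + 1)"
    using Km pot_bound_ge_1[of u] by (intro mult_mono) auto
  moreover have "0 \<le> K * card M * B * card (-M)"
    using Km pot_bound_ge_1[of u] by simp
  ultimately have "64 * (K * card M * B * card (-M)) \<le> D"
    by (simp add: D_def algebra_simps)
  then show "4 * (K * card M) * B * (card (-M) * pure_tol r) \<le> r / 16"
    using assms D by (simp add: tol field_simps mult_left_mono)
qed

lemma nbhd_pure_sum:
  "x \<in> nbhd r \<Longrightarrow> (\<Sum>i\<in>-M. \<bar>x $ i - s $ i\<bar>) \<le> card (-M) * pure_tol r"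
  unfolding nbhd_def by (intro sum_bounded_above) auto

lemma nbhd_dist1:
  assumes "0 < r" "x \<in> nbhd r"
  shows "dist1 x s \<le> r"
  using dist1_split[of x s M] nbhd_pure_sum[OF assms(2)] pure_tol_bounds(2)[OF assms(1)] assms
  by (simp add: nbhd_def)

lemma center_in_nbhd: "0 < r \<Longrightarrow> s \<in> nbhd r"
  using s_in_Delta pure_tol_bounds(1)[of r] by (simp add: nbhd_def)

lemma nbhd_eq:
  "nbhd r = \<Delta> \<inter> {x. (\<Sum>i\<in>M. \<bar>x $ i - s $ i\<bar>) \<le> r / 2}
     \<inter> (\<Inter>k\<in>-M. {x. (\<Sum>i\<in>{k}. \<bar>x $ i - s $ i\<bar>) \<le> pure_tol r})"
  by (auto simp: nbhd_def)

lemma compact_nbhd: "compact (nbhd r)"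
  unfolding nbhd_eq
  by (intro compact_Int_closed compact_Delta closed_Int closed_INT ballI closed_Collect_le continuous_intros)

lemma convex_nbhd: "convex (nbhd r)"
  unfolding nbhd_eq
  by (intro convex_Int convex_INT convex_Delta convex_sublevel_set convex_on_sum_abs_coord_diff)

lemma fixpoint_map_mixing_nbhd:
  assumes lam: "0 < lam" and r: "0 < r" "r \<le> radius" and small_mixing: "8 * (K * card M + 1) * lam \<le> a * r"
    and x: "x \<in> nbhd r"
  shows "(\<Sum>i\<in>M. \<bar>fixpoint_map lam x $ i - s $ i\<bar>) \<le> r / 2"
proof -
  define A where "A = K * card M"
  have A: "0 \<le> A" "64 * A * B * r \<le> 1"
    using abs_sum_nonneg[of M G] radius_hessian r B_pos
    by (auto simp: A_def intro: order_trans[OF mult_left_mono[of r radius]])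
  have d: "0 \<le> dist1 x s" "dist1 x s \<le> r" using dist1_nonneg nbhd_dist1[OF r(1) x] .
  have x_Delta: "x \<in> \<Delta>" using x by (simp add: nbhd_def)
  have t1: "A * (2 * lam / a) \<le> r / 4"
    using small_mixing A(1) lam a_pos by (simp add: A_def field_simps)
  have t2: "A * (8 * B * dist1 x s * dist1 x s) \<le> r / 8"
  proof -
    have "A * (8 * B * dist1 x s * dist1 x s) \<le> (8 * A * B * r) * r"
      using d A(1) B_pos by (simp add: mult_mono mult_left_mono mult.assoc mult.left_commute)
    also have "\<dots> \<le> r / 8" using A(2) r(1) by (simp add: mult_right_mono)
    finally show ?thesis .
  qed
  have t3: "A * (4 * B * (\<Sum>i\<in>-M. \<bar>x $ i - s $ i\<bar>)) \<le> A * (4 * B * (card (-M) * pure_tol r))"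
    using nbhd_pure_sum[OF x] A(1) B_pos by (intro mult_left_mono) auto
  have t4: "A * (4 * B * (card (-M) * pure_tol r)) \<le> r / 16"
    using pure_tol_bounds(3)[OF r(1)] by (simp add: A_def mult_ac)
  have "(\<Sum>i\<in>M. \<bar>fixpoint_map lam x $ i - s $ i\<bar>)
      \<le> A * (2 * lam / a) + A * (8 * B * dist1 x s * dist1 x s) + A * (4 * B * (\<Sum>i\<in>-M. \<bar>x $ i - s $ i\<bar>))"
    using fixpoint_map_mixing_close[OF lam x_Delta order_trans[OF d(2) r(2)]]
    by (simp only: A_def distrib_left)
  then show ?thesis using t1 t2 t3 t4 r(1) by linarith
qed

lemma fixpoint_map_nbhd:
  assumes lam: "0 < lam" and r: "0 < r" "r \<le> radius"
    and small_mixing: "8 * (K * card M + 1) * lam \<le> a * r" and small_pure: "8 * lam\<^sup>2 \<le> c\<^sup>2 * pure_tol r"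
    and x: "x \<in> nbhd r"
  shows "fixpoint_map lam x \<in> nbhd r"
proof -
  have x_Delta: "x \<in> \<Delta>" and near: "dist1 x s \<le> radius"
    using x nbhd_dist1[OF r(1) x] r(2) by (auto simp: nbhd_def)
  have mixing: "(\<Sum>i\<in>M. \<bar>fixpoint_map lam x $ i - s $ i\<bar>) \<le> r / 2"
    by (rule fixpoint_map_mixing_nbhd[OF lam r small_mixing x])
  have pure: "\<bar>fixpoint_map lam x $ k - s $ k\<bar> \<le> pure_tol r" if "k \<notin> M" for k
  proof -
    have "8 * lam\<^sup>2 / c\<^sup>2 \<le> pure_tol r"
      using small_pure c_pos by (simp add: pos_divide_le_eq mult.commute)
    then show ?thesis using fixpoint_map_pure_close[OF lam x_Delta near that] by linarith
  qed
  have "0 \<le> fixpoint_map lam x $ i \<and> fixpoint_map lam x $ i \<le> 1" for i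
  proof (cases "i \<in> M")
    case True
    have "\<bar>fixpoint_map lam x $ i - s $ i\<bar> \<le> a"
      using member_le_sum[of i M "\<lambda>i. \<bar>fixpoint_map lam x $ i - s $ i\<bar>"] True mixing r radius_le_a
      by simp
    then show ?thesis using mixing_margin[OF True] a_pos by (auto simp: abs_le_iff)
  next
    case False
    then show ?thesis
      using logistic_pos less_imp_le[OF logistic_less_1] by (simp add: fixpoint_map_def less_imp_le)
  qed
  then show ?thesis using mixing pure by (simp add: nbhd_def mixed_profiles_def)
qed

lemma continuous_on_fixpoint_map:
  assumes "0 < lam" "0 < r" "r \<le> radius"
  shows "continuous_on (nbhd r) (fixpoint_map lam)"
  unfolding fixpoint_map_def residual_def logit_def
proof (intro continuous_on_vec_lambda)
  fix i
  have "x $ l \<noteq> 0 \<and> 1 - x $ l \<noteq> 0" if "x \<in> nbhd r" "l \<in> M" for x l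
    using near_mixing[OF order_trans[OF nbhd_dist1[OF assms(2) that(1)] assms(3)] that(2)] a_pos by auto
  then show "continuous_on (nbhd r) (\<lambda>x. if i \<in> M
      then s $ i + (\<Sum>l\<in>M. (lam * (ln (x $ l) - ln (1 - x $ l))
        - (dU u l x - (\<Sum>i\<in>M. (x $ i - s $ i) * d2U u i l s))) * G l i)
      else logistic (dU u i x / lam))"
    using assms(1) by (cases "i \<in> M") (auto intro!: continuous_intros)
qed

lemma ND_exists_near:
  assumes lam: "0 < lam" and r: "0 < r" "r \<le> radius"
    and small_mixing: "8 * (K * card M + 1) * lam \<le> a * r" and small_pure: "8 * lam\<^sup>2 \<le> c\<^sup>2 * pure_tol r"
  shows "\<exists>x\<in>ND u lam. dist1 x s \<le> r"
proof -
  obtain x where x: "x \<in> nbhd r" and fixed: "fixpoint_map lam x = x"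
    using brouwer[OF compact_nbhd convex_nbhd _ continuous_on_fixpoint_map[OF lam r]]
      center_in_nbhd[OF r(1)] fixpoint_map_nbhd[OF lam r small_mixing small_pure]
    by blast
  have "dist1 x s \<le> r" by (rule nbhd_dist1[OF r(1) x])
  moreover have "x \<in> ND u lam"
    using x fixed r(2) \<open>dist1 x s \<le> r\<close>
    by (intro fixpoint_map_fixed_point_in_ND[OF lam]) (auto simp: nbhd_def)
  ultimately show ?thesis by blast
qed

lemma ND_eventually_exists_near:
  assumes "0 < r" "r \<le> radius"
  shows "\<forall>\<^sub>F lam in at_right 0. \<exists>x\<in>ND u lam. dist1 x s \<le> r"
proof -
  have "\<forall>\<^sub>F lam in at_right 0. 8 * (K * card M + 1) * lam ^ 1 \<le> a * r"
    using a_pos assms by (intro eventually_mult_power_le_at_right_0) auto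
  moreover have "\<forall>\<^sub>F lam in at_right 0. 8 * lam ^ 2 \<le> c\<^sup>2 * pure_tol r"
    using c_pos pure_tol_bounds(1)[OF assms(1)] by (intro eventually_mult_power_le_at_right_0) auto
  ultimately show ?thesis
    using eventually_at_right_less[of 0] by eventually_elim (use assms ND_exists_near in auto)
qed

end

subsection \<open>From local to global\<close>

lemma regular_NE_local_radius:
  assumes "s \<in> NE u" "regular_NE u s"
  shows "\<exists>R>0. (\<forall>y\<in>NE u. dist1 y s \<le> R \<longrightarrow> y = s)
    \<and> (\<forall>\<^sub>F lam in at_right 0. \<forall>x\<in>ND u lam. \<forall>y\<in>ND u lam.
         dist1 x s \<le> R \<longrightarrow> dist1 y s \<le> R \<longrightarrow> x = y)
    \<and> (\<forall>r. 0 < r \<longrightarrow> r \<le> R \<longrightarrow> (\<forall>\<^sub>F lam in at_right 0. \<exists>x\<in>ND u lam. dist1 x s \<le> r))"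
proof -
  obtain a c G where "regular_equilibrium u s a c G"
    using regular_NE_imp_regular_equilibrium[OF assms] .
  then interpret regular_equilibrium u s a c G .
  show ?thesis
    using radius_pos NE_isolated ND_eventually_unique_near ND_eventually_exists_near by blast
qed

lemma finite_NE:
  assumes reg: "regular_game u"
  shows "finite (NE u)"
proof -
  have "\<forall>s\<in>NE u. \<exists>R>0. \<forall>y\<in>NE u. dist1 y s \<le> R \<longrightarrow> y = s"
    using regular_NE_local_radius reg unfolding regular_game_def by blast
  then obtain R where R: "\<forall>s\<in>NE u. 0 < R s \<and> (\<forall>y\<in>NE u. dist1 y s \<le> R s \<longrightarrow> y = s)"
    by (auto dest!: bchoice)
  have cover: "NE u \<subseteq> (\<Union>s\<in>NE u. {x. dist1 x s < R s})"
    using R by auto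
  have open_balls: "open {x. dist1 x s < R s}" for s
    by (intro open_Collect_less continuous_on_dist1 continuous_intros)
  obtain C where C: "C \<subseteq> NE u" "finite C" "NE u \<subseteq> (\<Union>s\<in>C. {x. dist1 x s < R s})"
    using compactE_image[OF compact_NE open_balls cover] by blast
  have "NE u \<subseteq> C"
  proof
    fix y assume y: "y \<in> NE u"
    then obtain s where "s \<in> C" "dist1 y s < R s" using C(3) by blast
    then show "y \<in> C" using R C(1) y by (metis less_imp_le subsetD)
  qed
  then show ?thesis using C(2) finite_subset by blast
qed

lemma compact_positive_lower_bound:
  fixes f :: "'a::topological_space \<Rightarrow> real"
  assumes "compact F" "continuous_on F f" "\<And>x. x \<in> F \<Longrightarrow> 0 < f x"
  obtains m where "0 < m" "\<And>x. x \<in> F \<Longrightarrow> m \<le> f x"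
proof (cases "F = {}")
  case False
  then obtain x0 where "x0 \<in> F" "\<forall>y\<in>F. f x0 \<le> f y"
    using continuous_attains_inf[OF assms(1) _ assms(2)] by blast
  then show ?thesis using that assms(3) by blast
qed (use that[of 1] in auto)

lemma finite_separated:
  assumes "finite S"
  obtains d where "0 < d" "\<And>x y. x \<in> S \<Longrightarrow> y \<in> S \<Longrightarrow> x \<noteq> y \<Longrightarrow> d \<le> dist1 x y"
proof -
  have "finite {(x, y). x \<in> S \<and> y \<in> S \<and> x \<noteq> y}"
    by (rule finite_subset[of _ "S \<times> S"]) (use assms in auto)
  then obtain d where "0 < d" "\<And>p. p \<in> {(x, y). x \<in> S \<and> y \<in> S \<and> x \<noteq> y} \<Longrightarrow> d \<le> dist1 (fst p) (snd p)"
  proof (rule finite_positive_lower_bound)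
    show "0 < dist1 (fst p) (snd p)" if "p \<in> {(x, y). x \<in> S \<and> y \<in> S \<and> x \<noteq> y}" for p
      using that dist1_le_0_iff[of "fst p" "snd p"] by auto
  qed blast
  then show ?thesis using that by auto
qed

lemma ND_eventually_near_NE:
  fixes u :: "('n::finite \<Rightarrow> bool) \<Rightarrow> real"
  assumes "0 < rho"
  shows "\<forall>\<^sub>F lam in at_right 0. \<forall>x\<in>ND u lam. \<exists>s\<in>NE u. dist1 x s < rho"
proof -
  define F where "F = \<Delta> \<inter> (\<Inter>s\<in>NE u. {x. rho \<le> dist1 x s})"
  have "compact F"
    unfolding F_def
    by (intro compact_Int_closed compact_Delta closed_INT ballI closed_Collect_le continuous_intros)
  moreover have "0 < regret u x" if "x \<in> F" for x
  proof -
    have "x \<in> \<Delta>" "x \<notin> NE u" using that assms by (force simp: F_def)+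
    then show ?thesis using NE_iff_regret_eq_0 regret_nonneg by (metis order_le_less)
  qed
  ultimately obtain m where m: "0 < m" "\<And>x. x \<in> F \<Longrightarrow> m \<le> regret u x"
    using compact_positive_lower_bound continuous_on_regret by metis
  have "\<forall>\<^sub>F lam in at_right 0. real CARD('n) * lam ^ 1 \<le> m / 2"
    using m(1) by (intro eventually_mult_power_le_at_right_0) auto
  with eventually_at_right_less[of 0] show ?thesis
  proof eventually_elim
    case (elim lam)
    show ?case
    proof
      fix x assume x: "x \<in> ND u lam"
      have "regret u x < m" using regret_ND_le[OF _ x] elim m(1) by fastforce
      then have "x \<notin> F" using m(2) by force
      then show "\<exists>s\<in>NE u. dist1 x s < rho" using x by (force simp: F_def ND_iff not_le)
    qed
  qed
qed

text \<open>The graph of the solution is closed and its values lie in a compact set.\<close>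

lemma continuous_on_unique_solution:
  fixes g :: "real \<times> 'a::euclidean_space \<Rightarrow> 'b::t1_space"
  assumes K: "compact K" and g: "continuous_on (I \<times> K) g"
    and unique: "\<And>t. t \<in> I \<Longrightarrow> \<exists>!x. x \<in> K \<and> g (t, x) = c"
  shows "continuous_on I (\<lambda>t. THE x. x \<in> K \<and> g (t, x) = c)"
proof -
  let ?f = "\<lambda>t. THE x. x \<in> K \<and> g (t, x) = c"
  have f: "?f t \<in> K \<and> g (t, ?f t) = c" if "t \<in> I" for t
    using theI'[OF unique[OF that]] .
  have graph: "(\<lambda>t. (t, ?f t)) ` I = (I \<times> K) \<inter> g -` {c}"
  proof (intro equalityI subsetI)
    fix p assume "p \<in> (\<lambda>t. (t, ?f t)) ` I"
    then obtain t where "t \<in> I" "p = (t, ?f t)" by blast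
    then show "p \<in> (I \<times> K) \<inter> g -` {c}" using f[of t] by simp
  next
    fix p assume "p \<in> (I \<times> K) \<inter> g -` {c}"
    then obtain t x where p: "p = (t, x)" "t \<in> I" "x \<in> K" "g (t, x) = c" by auto
    then have "x = ?f t" by (intro the1_equality[symmetric] unique) auto
    then show "p \<in> (\<lambda>t. (t, ?f t)) ` I" using p by simp
  qed
  have "closedin (top_of_set (I \<times> K)) ((I \<times> K) \<inter> g -` {c})"
    by (rule continuous_closedin_preimage[OF g closed_singleton])
  moreover have "?f \<in> I \<rightarrow> K" using f by simp
  ultimately show ?thesis
    using continuous_closed_graph_eq[of K ?f I] K unfolding graph by simp
qed

definition ND_branch :: "(('n::finite \<Rightarrow> bool) \<Rightarrow> real) \<Rightarrow> real \<Rightarrow> real^'n \<Rightarrow> real \<Rightarrow> real^'n" where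
  "ND_branch u rho s lam = (THE x. x \<in> ND u lam \<and> dist1 x s \<le> rho)"

lemma ND_branch:
  assumes "\<exists>!x. x \<in> ND u lam \<and> dist1 x s \<le> rho"
  shows "ND_branch u rho s lam \<in> ND u lam" "dist1 (ND_branch u rho s lam) s \<le> rho"
    "\<And>y. y \<in> ND u lam \<Longrightarrow> dist1 y s \<le> rho \<Longrightarrow> y = ND_branch u rho s lam"
proof -
  show "ND_branch u rho s lam \<in> ND u lam" "dist1 (ND_branch u rho s lam) s \<le> rho"
    using theI'[OF assms] unfolding ND_branch_def by simp_all
  show "y = ND_branch u rho s lam" if "y \<in> ND u lam" "dist1 y s \<le> rho" for y
    unfolding ND_branch_def by (rule the1_equality[OF assms, symmetric]) (use that in simp)
qed

lemma continuous_on_ND_branch: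
  assumes I: "I \<subseteq> {0<..}" and unique: "\<And>lam. lam \<in> I \<Longrightarrow> \<exists>!x. x \<in> ND u lam \<and> dist1 x s \<le> rho"
  shows "continuous_on I (ND_branch u rho s)"
proof -
  define K where "K = \<Delta> \<inter> {x. dist1 x s \<le> rho}"
  have ND_K: "x \<in> ND u lam \<and> dist1 x s \<le> rho \<longleftrightarrow> x \<in> K \<and> x - logitBR u lam x = 0" for lam x
    by (auto simp: K_def ND_def)
  have "continuous_on I (\<lambda>lam. THE x. x \<in> K \<and> snd (lam, x) - logitBR u (fst (lam, x)) (snd (lam, x)) = 0)"
  proof (rule continuous_on_unique_solution)
    show "compact K"
      unfolding K_def by (intro compact_Int_closed compact_Delta closed_Collect_le continuous_intros)
    show "continuous_on (I \<times> K) (\<lambda>p. snd p - logitBR u (fst p) (snd p))"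
      using I by (intro continuous_intros continuous_on_subset[OF continuous_on_logitBR]) auto
  qed (use unique ND_K in simp)
  then show ?thesis unfolding ND_branch_def ND_K by simp
qed

lemma ND_branch_tendsto:
  assumes unique: "\<forall>\<^sub>F lam in at_right 0. \<exists>!x. x \<in> ND u lam \<and> dist1 x s \<le> rho"
    and near: "\<And>r. 0 < r \<Longrightarrow> r \<le> rho \<Longrightarrow> \<forall>\<^sub>F lam in at_right 0. \<exists>x\<in>ND u lam. dist1 x s \<le> r"
    and rho: "0 < rho"
  shows "(ND_branch u rho s \<longlongrightarrow> s) (at_right 0)"
proof (rule tendstoI)
  fix e :: real assume e: "0 < e"
  let ?r = "min rho (e / 2)"
  have "\<forall>\<^sub>F lam in at_right 0. \<exists>x\<in>ND u lam. dist1 x s \<le> ?r"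
    by (rule near) (use rho e in auto)
  with unique show "\<forall>\<^sub>F lam in at_right 0. dist (ND_branch u rho s lam) s < e"
  proof eventually_elim
    case (elim lam)
    then obtain x where "x \<in> ND u lam" "dist1 x s \<le> ?r" by blast
    then have "x = ND_branch u rho s lam" using ND_branch(3)[OF elim(1)] by simp
    then show ?case using dist_le_dist1[of x s] \<open>dist1 x s \<le> ?r\<close> e by simp
  qed
qed

lemma ND_eq_branch_image:
  assumes sep: "\<And>s t. s \<in> S \<Longrightarrow> t \<in> S \<Longrightarrow> s \<noteq> t \<Longrightarrow> 2 * rho < dist1 s t"
    and unique: "\<forall>s\<in>S. \<exists>!x. x \<in> ND u lam \<and> dist1 x s \<le> rho"
    and cover: "\<forall>x\<in>ND u lam. \<exists>s\<in>S. dist1 x s < rho"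
  shows "inj_on (\<lambda>s. ND_branch u rho s lam) S" "ND u lam = (\<lambda>s. ND_branch u rho s lam) ` S"
proof -
  show "inj_on (\<lambda>s. ND_branch u rho s lam) S"
  proof (rule inj_onI, rule ccontr)
    fix s t assume s: "s \<in> S" and t: "t \<in> S" and eq: "ND_branch u rho s lam = ND_branch u rho t lam" and "s \<noteq> t"
    have "dist1 s t \<le> dist1 s (ND_branch u rho s lam) + dist1 (ND_branch u rho t lam) t"
      using dist1_triangle[of s t "ND_branch u rho s lam"] eq by simp
    also have "\<dots> \<le> 2 * rho"
      using ND_branch(2)[OF bspec[OF unique s]] ND_branch(2)[OF bspec[OF unique t]]
      by (simp add: dist1_commute)
    finally show False using sep[OF s t \<open>s \<noteq> t\<close>] by simp
  qed
  show "ND u lam = (\<lambda>s. ND_branch u rho s lam) ` S"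
  proof (intro equalityI subsetI)
    fix x assume x: "x \<in> ND u lam"
    then obtain s where "s \<in> S" "dist1 x s < rho" using cover by blast
    then show "x \<in> (\<lambda>s. ND_branch u rho s lam) ` S"
      using ND_branch(3)[OF bspec[OF unique \<open>s \<in> S\<close>] x] by auto
  qed (use ND_branch(1) unique in blast)
qed

lemma regular_game_uniform_radius:
  assumes reg: "regular_game u"
  obtains R where "0 < R"
    "\<And>s. s \<in> NE u \<Longrightarrow> \<forall>\<^sub>F lam in at_right 0. \<forall>x\<in>ND u lam. \<forall>y\<in>ND u lam.
       dist1 x s \<le> R \<longrightarrow> dist1 y s \<le> R \<longrightarrow> x = y"
    "\<And>s r. s \<in> NE u \<Longrightarrow> 0 < r \<Longrightarrow> r \<le> R \<Longrightarrow> \<forall>\<^sub>F lam in at_right 0. \<exists>x\<in>ND u lam. dist1 x s \<le> r"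
proof -
  have "\<forall>s\<in>NE u. \<exists>R>0. (\<forall>\<^sub>F lam in at_right 0. \<forall>x\<in>ND u lam. \<forall>y\<in>ND u lam.
      dist1 x s \<le> R \<longrightarrow> dist1 y s \<le> R \<longrightarrow> x = y)
      \<and> (\<forall>r. 0 < r \<longrightarrow> r \<le> R \<longrightarrow> (\<forall>\<^sub>F lam in at_right 0. \<exists>x\<in>ND u lam. dist1 x s \<le> r))"
    using regular_NE_local_radius reg unfolding regular_game_def by blast
  then obtain R where "\<forall>s\<in>NE u. 0 < R s \<and> (\<forall>\<^sub>F lam in at_right 0. \<forall>x\<in>ND u lam. \<forall>y\<in>ND u lam.
      dist1 x s \<le> R s \<longrightarrow> dist1 y s \<le> R s \<longrightarrow> x = y)
      \<and> (\<forall>r. 0 < r \<longrightarrow> r \<le> R s \<longrightarrow> (\<forall>\<^sub>F lam in at_right 0. \<exists>x\<in>ND u lam. dist1 x s \<le> r))"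
    by (auto dest!: bchoice)
  then have R: "\<And>s. s \<in> NE u \<Longrightarrow> 0 < R s"
    and unique: "\<And>s. s \<in> NE u \<Longrightarrow> \<forall>\<^sub>F lam in at_right 0. \<forall>x\<in>ND u lam. \<forall>y\<in>ND u lam.
      dist1 x s \<le> R s \<longrightarrow> dist1 y s \<le> R s \<longrightarrow> x = y"
    and exists: "\<And>s r. s \<in> NE u \<Longrightarrow> 0 < r \<Longrightarrow> r \<le> R s \<Longrightarrow>
      \<forall>\<^sub>F lam in at_right 0. \<exists>x\<in>ND u lam. dist1 x s \<le> r"
    by simp_all
  obtain R0 where R0: "0 < R0" "\<And>s. s \<in> NE u \<Longrightarrow> R0 \<le> R s"
    by (rule finite_positive_lower_bound[OF finite_NE[OF reg], of R]) (use R in blast)+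
  show ?thesis
  proof (rule that[OF R0(1)])
    show "\<forall>\<^sub>F lam in at_right 0. \<forall>x\<in>ND u lam. \<forall>y\<in>ND u lam.
        dist1 x s \<le> R0 \<longrightarrow> dist1 y s \<le> R0 \<longrightarrow> x = y" if "s \<in> NE u" for s
      using unique[OF that] by eventually_elim (use R0(2)[OF that] in \<open>meson order_trans\<close>)
    show "\<forall>\<^sub>F lam in at_right 0. \<exists>x\<in>ND u lam. dist1 x s \<le> r"
      if "s \<in> NE u" "0 < r" "r \<le> R0" for s r
      using exists[OF that(1,2)] that(3) R0(2)[OF that(1)] by simp
  qed
qed

lemma eventually_ex1_ND_near:
  assumes unique: "\<forall>\<^sub>F lam in at_right 0. \<forall>x\<in>ND u lam. \<forall>y\<in>ND u lam.
      dist1 x s \<le> R \<longrightarrow> dist1 y s \<le> R \<longrightarrow> x = y"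
    and exists: "\<forall>\<^sub>F lam in at_right 0. \<exists>x\<in>ND u lam. dist1 x s \<le> rho" and "rho \<le> R"
  shows "\<forall>\<^sub>F lam in at_right 0. \<exists>!x. x \<in> ND u lam \<and> dist1 x s \<le> rho"
  using unique exists
proof eventually_elim
  case (elim lam)
  then obtain x where x: "x \<in> ND u lam" "dist1 x s \<le> rho" by blast
  moreover have "y = x" if "y \<in> ND u lam" "dist1 y s \<le> rho" for y
    using elim(1) x that \<open>rho \<le> R\<close> by (meson order_trans)
  ultimately show ?case by blast
qed

lemma regular_game_branch_radius:
  assumes reg: "regular_game u"
  obtains rho where "0 < rho" "\<And>s t. s \<in> NE u \<Longrightarrow> t \<in> NE u \<Longrightarrow> s \<noteq> t \<Longrightarrow> 2 * rho < dist1 s t"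
    "\<forall>\<^sub>F lam in at_right 0. (\<forall>s\<in>NE u. \<exists>!x. x \<in> ND u lam \<and> dist1 x s \<le> rho)
       \<and> (\<forall>x\<in>ND u lam. \<exists>s\<in>NE u. dist1 x s < rho)"
    "\<And>s r. s \<in> NE u \<Longrightarrow> 0 < r \<Longrightarrow> r \<le> rho \<Longrightarrow> \<forall>\<^sub>F lam in at_right 0. \<exists>x\<in>ND u lam. dist1 x s \<le> r"
proof -
  have fin: "finite (NE u)" by (rule finite_NE[OF reg])
  obtain R where R: "0 < R"
    and unique: "\<And>s. s \<in> NE u \<Longrightarrow> \<forall>\<^sub>F lam in at_right 0. \<forall>x\<in>ND u lam. \<forall>y\<in>ND u lam.
       dist1 x s \<le> R \<longrightarrow> dist1 y s \<le> R \<longrightarrow> x = y"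
    and exists: "\<And>s r. s \<in> NE u \<Longrightarrow> 0 < r \<Longrightarrow> r \<le> R \<Longrightarrow>
       \<forall>\<^sub>F lam in at_right 0. \<exists>x\<in>ND u lam. dist1 x s \<le> r"
    by (rule regular_game_uniform_radius[OF reg]) blast
  obtain d where d: "0 < d" "\<And>s t. s \<in> NE u \<Longrightarrow> t \<in> NE u \<Longrightarrow> s \<noteq> t \<Longrightarrow> d \<le> dist1 s t"
    by (rule finite_separated[OF fin]) blast
  define rho where "rho = min R (d / 3)"
  have rho: "0 < rho" "rho \<le> R" "2 * rho < d"
    using R d(1) by (simp_all add: rho_def)
  have "\<forall>\<^sub>F lam in at_right 0. \<exists>!x. x \<in> ND u lam \<and> dist1 x s \<le> rho" if s: "s \<in> NE u" for s
    by (rule eventually_ex1_ND_near[OF unique[OF s] exists[OF s rho(1,2)] rho(2)])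
  then have "\<forall>\<^sub>F lam in at_right 0. \<forall>s\<in>NE u. \<exists>!x. x \<in> ND u lam \<and> dist1 x s \<le> rho"
    by (intro eventually_ball_finite[OF fin]) blast
  show ?thesis
  proof (rule that[OF rho(1)])
    show "2 * rho < dist1 s t" if "s \<in> NE u" "t \<in> NE u" "s \<noteq> t" for s t
      using d(2)[OF that] rho(3) by linarith
    show "\<forall>\<^sub>F lam in at_right 0. (\<forall>s\<in>NE u. \<exists>!x. x \<in> ND u lam \<and> dist1 x s \<le> rho)
       \<and> (\<forall>x\<in>ND u lam. \<exists>s\<in>NE u. dist1 x s < rho)"
      using \<open>\<forall>\<^sub>F lam in at_right 0. \<forall>s\<in>NE u. _\<close> ND_eventually_near_NE[OF rho(1)] by (rule eventually_conj)
    show "\<forall>\<^sub>F lam in at_right 0. \<exists>x\<in>ND u lam. dist1 x s \<le> r"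
      if "s \<in> NE u" "0 < r" "r \<le> rho" for s r
      using exists[OF that(1,2)] that(3) rho(2) by simp
  qed
qed

text \<open>The potential game structure enters only through \<open>u\<close>, in terms of which equilibria,
  Nash distributions and regularity are all defined.\<close>

theorem theorem3:
  fixes ui :: "'n::finite \<Rightarrow> ('n \<Rightarrow> bool) \<Rightarrow> real"
    and u :: "('n \<Rightarrow> bool) \<Rightarrow> real"
  assumes "is_potential ui u"
    and "regular_game u"
  shows "finite (NE u) \<and>
    (\<exists>lam0>0. \<exists>xl :: real^'n \<Rightarrow> real \<Rightarrow> real^'n.
       (\<forall>xs\<in>NE u. continuous_on {0<..<lam0} (xl xs) \<and> xl xs ` {0<..<lam0} \<subseteq> \<Delta>) \<and>
       (\<forall>lam\<in>{0<..<lam0}. inj_on (\<lambda>xs. xl xs lam) (NE u) \<and>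
            ND u lam = (\<lambda>xs. xl xs lam) ` NE u \<and> finite (ND u lam)) \<and>
       (\<forall>xs\<in>NE u. (xl xs \<longlongrightarrow> xs) (at_right 0)))"
proof -
  have fin: "finite (NE u)" by (rule finite_NE[OF assms(2)])
  obtain rho where rho: "0 < rho" "\<And>s t. s \<in> NE u \<Longrightarrow> t \<in> NE u \<Longrightarrow> s \<noteq> t \<Longrightarrow> 2 * rho < dist1 s t"
    and branches: "\<forall>\<^sub>F lam in at_right 0. (\<forall>s\<in>NE u. \<exists>!x. x \<in> ND u lam \<and> dist1 x s \<le> rho)
       \<and> (\<forall>x\<in>ND u lam. \<exists>s\<in>NE u. dist1 x s < rho)"
    and exists: "\<And>s r. s \<in> NE u \<Longrightarrow> 0 < r \<Longrightarrow> r \<le> rho \<Longrightarrow>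
      \<forall>\<^sub>F lam in at_right 0. \<exists>x\<in>ND u lam. dist1 x s \<le> r"
    by (rule regular_game_branch_radius[OF assms(2)]) blast
  from branches obtain lam0 where lam0: "0 < lam0" and good: "\<forall>lam>0. lam < lam0 \<longrightarrow>
      (\<forall>s\<in>NE u. \<exists>!x. x \<in> ND u lam \<and> dist1 x s \<le> rho) \<and> (\<forall>x\<in>ND u lam. \<exists>s\<in>NE u. dist1 x s < rho)"
    unfolding eventually_at_right_field by blast
  have unique: "\<exists>!x. x \<in> ND u lam \<and> dist1 x s \<le> rho" if "lam \<in> {0<..<lam0}" "s \<in> NE u" for lam s
    using good[rule_format, of lam] that by simp
  have cover: "\<forall>x\<in>ND u lam. \<exists>s\<in>NE u. dist1 x s < rho" if "lam \<in> {0<..<lam0}" for lam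
    using good[rule_format, of lam] that by simp
  show ?thesis
  proof (intro conjI fin exI[of _ lam0] exI[of _ "ND_branch u rho"] lam0 ballI)
    fix s assume s: "s \<in> NE u"
    show "continuous_on {0<..<lam0} (ND_branch u rho s)"
      using unique[OF _ s] by (intro continuous_on_ND_branch) auto
    show "ND_branch u rho s ` {0<..<lam0} \<subseteq> \<Delta>"
      using ND_branch(1)[OF unique[OF _ s]] by (auto simp: ND_def)
    have "\<forall>\<^sub>F lam in at_right 0. \<exists>!x. x \<in> ND u lam \<and> dist1 x s \<le> rho"
      using branches by eventually_elim (use s in blast)
    then show "(ND_branch u rho s \<longlongrightarrow> s) (at_right 0)"
      using exists[OF s] rho(1) by (rule ND_branch_tendsto)
  next
    fix lam :: real assume lam: "lam \<in> {0<..<lam0}"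
    have unique_lam: "\<forall>s\<in>NE u. \<exists>!x. x \<in> ND u lam \<and> dist1 x s \<le> rho"
      using unique[OF lam] by blast
    show "inj_on (\<lambda>s. ND_branch u rho s lam) (NE u)"
      by (rule ND_eq_branch_image(1)[OF rho(2) unique_lam cover[OF lam]])
    show "ND u lam = (\<lambda>s. ND_branch u rho s lam) ` NE u"
      by (rule ND_eq_branch_image(2)[OF rho(2) unique_lam cover[OF lam]])
    then show "finite (ND u lam)" using fin by simp
  qed
qed

end
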